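(* Let $n\ge m\ge0$ and consider the multiplication map $$\mu:\mathbb{Z}_p[x]^1_m\times P_1^{n-m}\to B_{m,n}:=\{f\in\mathbb{Z}_p[x]_n:\ \overline f \text{ is monic of degree } m\},\qquad (g,h)\mapsto gh.$$ (a) $\mu$ is a measure-preserving bijection. (b) Let $r$ be an integer with $m\le r\le n$. Replace $B_{m,n}$ by its subset of those $f$ with $p^rf(x/p)\in\mathbb{Z}_p[x]$ and $p^rf(x/p)\equiv x^n\pmod p$, and replace $P_1^{n-m}$ by its subset of those $h$ with $p^{r-m}h(x/p)\in\mathbb{Z}_p[x]$ and $p^{r-m}h(x/p)\equiv x^{n-m}\pmod p$. Then $\mu$ restricts to a measure-preserving bijection between $\mathbb{Z}_p[x]^1_m\times(\text{this subset of }P_1^{n-m})$ and this subset of $B_{m,n}$.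
   Context: $\mathbb{Z}_p[x]_n$ is the set of polynomials over $\mathbb{Z}_p$ of degree at most $n$, identified with $\mathbb{Z}_p^{n+1}$ via coefficients; $\mathbb{Z}_p[x]^1_m$ is the set of monic polynomials of degree $m$, identified with $\mathbb{Z}_p^m$ via non-leading coefficients; these carry Haar measure and subsets carry the restricted measure. For $f\in\mathbb{Z}_p[x]$, $\overline f$ denotes its reduction mod $p$ in $\mathbb{F}_p[x]$. For $k\ge0$, $P_1^{k}$ denotes the set of $h\in\mathbb{Z}_p[x]_k$ with $\overline h=1$. *)

theory Defs
  imports "HOL-Probability.Probability"
begin

text \<open>p-adic integers are represented as compatible residue sequences:
  x k is the residue of x modulo p^k, in the range 0..p^k-1.\<close>

definition Zp :: "nat \<Rightarrow> (nat \<Rightarrow> int) set" where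
  "Zp p = {x. \<forall>k. 0 \<le> x k \<and> x k < int p ^ k \<and> x k = x (Suc k) mod (int p ^ k)}"

definition zp_mult :: "nat \<Rightarrow> (nat \<Rightarrow> int) \<Rightarrow> (nat \<Rightarrow> int) \<Rightarrow> (nat \<Rightarrow> int)" where
  "zp_mult p x y = (\<lambda>k. (x k * y k) mod (int p ^ k))"

definition zp_of_int :: "nat \<Rightarrow> int \<Rightarrow> (nat \<Rightarrow> int)" where
  "zp_of_int p a = (\<lambda>k. a mod (int p ^ k))"

definition zp_red :: "(nat \<Rightarrow> int) \<Rightarrow> int" where
  "zp_red x = x 1"

text \<open>Haar (probability) measure on Z_p: image of the product of uniform
  measures on the p-adic digits under the map digits to residues.\<close>
definition haar_Zp :: "nat \<Rightarrow> (nat \<Rightarrow> int) measure" where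
  "haar_Zp p = distr (PiM UNIV (\<lambda>_::nat. uniform_count_measure {..<p}))
                     (restrict_space (PiM UNIV (\<lambda>_::nat. count_space (UNIV::int set))) (Zp p))
                     (\<lambda>d k. int (\<Sum>i<k. d i * p ^ i))"

text \<open>Z_p[x]_n, identified with Z_p^(n+1) via coefficients 0..n.\<close>
definition poly_le :: "nat \<Rightarrow> nat \<Rightarrow> (nat \<Rightarrow> nat \<Rightarrow> int) measure" where
  "poly_le p n = PiM {..n} (\<lambda>_. haar_Zp p)"

text \<open>Z_p[x]^1_m, identified with Z_p^m via the non-leading coefficients 0..m-1.\<close>
definition monic_polys :: "nat \<Rightarrow> nat \<Rightarrow> (nat \<Rightarrow> nat \<Rightarrow> int) measure" where
  "monic_polys p m = PiM {..<m} (\<lambda>_. haar_Zp p)"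

definition P1 :: "nat \<Rightarrow> nat \<Rightarrow> (nat \<Rightarrow> nat \<Rightarrow> int) set" where
  "P1 p k = {h \<in> space (poly_le p k). \<forall>j\<le>k. zp_red (h j) = (if j = 0 then 1 else 0)}"

definition Bmn :: "nat \<Rightarrow> nat \<Rightarrow> nat \<Rightarrow> (nat \<Rightarrow> nat \<Rightarrow> int) set" where
  "Bmn p m n = {f \<in> space (poly_le p n). zp_red (f m) = 1 \<and> (\<forall>j. m < j \<and> j \<le> n \<longrightarrow> zp_red (f j) = 0)}"

text \<open>For f of degree at most d (coefficients 0..d): p^r f(x/p) lies in Z_p[x] and is
  congruent to x^d mod p.  The coefficients of p^r f(x/p) are c_j with p^j c_j = p^r f_j.\<close>
definition scaled_cond :: "nat \<Rightarrow> nat \<Rightarrow> nat \<Rightarrow> (nat \<Rightarrow> nat \<Rightarrow> int) \<Rightarrow> bool" where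
  "scaled_cond p r d f \<longleftrightarrow>
     (\<exists>c. (\<forall>j\<le>d. c j \<in> Zp p
              \<and> zp_mult p (zp_of_int p (int p ^ j)) (c j) = zp_mult p (zp_of_int p (int p ^ r)) (f j)
              \<and> zp_red (c j) = (if j = d then 1 else 0)))"

definition monic_coeff :: "nat \<Rightarrow> nat \<Rightarrow> (nat \<Rightarrow> nat \<Rightarrow> int) \<Rightarrow> nat \<Rightarrow> nat \<Rightarrow> int" where
  "monic_coeff p m g a = (if a < m then g a else if a = m then zp_of_int p 1 else zp_of_int p 0)"

definition le_coeff :: "nat \<Rightarrow> nat \<Rightarrow> (nat \<Rightarrow> nat \<Rightarrow> int) \<Rightarrow> nat \<Rightarrow> nat \<Rightarrow> int" where
  "le_coeff p k h b = (if b \<le> k then h b else zp_of_int p 0)"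

definition poly_mu :: "nat \<Rightarrow> nat \<Rightarrow> nat \<Rightarrow> (nat \<Rightarrow> nat \<Rightarrow> int) \<times> (nat \<Rightarrow> nat \<Rightarrow> int) \<Rightarrow> (nat \<Rightarrow> nat \<Rightarrow> int)" where
  "poly_mu p m n gh = (\<lambda>j\<in>{..n}. \<lambda>k.
      (\<Sum>a\<le>j. monic_coeff p m (fst gh) a k * le_coeff p (n - m) (snd gh) (j - a) k) mod (int p ^ k))"

definition mp_bij :: "'a measure \<Rightarrow> 'b measure \<Rightarrow> ('a \<Rightarrow> 'b) \<Rightarrow> bool" where
  "mp_bij M N f \<longleftrightarrow> bij_betw f (space M) (space N) \<and> f \<in> measurable M N \<and> distr M N f = N"

end

(*
  Work modulo p^k. At level k, multiplication sends the residues of a monic g of degree m and of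
  an h with h = 1 mod p to the residues of a polynomial whose reduction is monic of degree m. This
  map is injective by a Hensel-type uniqueness argument (division with remainder by the monic
  factor), and both sides have p^(km + (k-1)(n-m+1)) elements, so it is bijective; the compatible
  level-wise inverses give the inverse of mu. As mu commutes with reduction mod p^k, it maps each
  level-k cylinder of the domain onto a level-k cylinder of B_{m,n}, and both have Haar measure
  p^(-k(n+1)). Cylinders generate the sigma-algebras, so mu is measure preserving.
  For (b), the conditions on p^r f(x/p) and p^(r-m) h(x/p) only depend on residues mod p^(n+1),
  and comparing coefficients of p^r (g h)(x/p) from the top down shows that they are equivalent
  for f = g h (an analogue of Gauss's lemma). Hence mu restricts to the two subsets.
*)
theory Submission
  imports Defs "HOL-Computational_Algebra.Polynomial"
begin

section \<open>p-adic integers as compatible residue sequences\<close>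

lemma Zp_memD:
  assumes "x \<in> Zp p"
  shows "0 \<le> x k" "x k < int p ^ k" "x k = x (Suc k) mod (int p ^ k)"
  using assms unfolding Zp_def mem_Collect_eq by blast+

lemma Zp_0: "x \<in> Zp p \<Longrightarrow> x 0 = 0"
  using Zp_memD[of x p 0] by simp

lemma Zp_compat:
  assumes "x \<in> Zp p" "k \<le> k'"
  shows "x k = x k' mod (int p ^ k)"
  using assms(2)
proof (induction k' rule: dec_induct)
  case base
  then show ?case using Zp_memD[OF assms(1), of k] by simp
next
  case (step k')
  have step_eq: "x k' = x (Suc k') mod int p ^ k'" using Zp_memD(3)[OF assms(1)] .
  have d: "int p ^ k dvd int p ^ k'" using step(1) by (simp add: le_imp_power_dvd)
  have "x k = x k' mod int p ^ k" by (rule step.IH)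
  also have "\<dots> = x (Suc k') mod int p ^ k' mod int p ^ k" by (subst step_eq) (rule refl)
  also have "\<dots> = x (Suc k') mod int p ^ k" by (rule mod_mod_cancel[OF d])
  finally show ?case .
qed

lemma Zp_eqI:
  assumes "x \<in> Zp p" "y \<in> Zp p" "\<And>k. k \<ge> 1 \<Longrightarrow> x k = y k"
  shows "x = y"
proof
  fix k show "x k = y k"
    using assms Zp_0[OF assms(1)] Zp_0[OF assms(2)] by (cases k) auto
qed

lemma Zp_residues_of:
  assumes "p > 0" "0 \<le> c" "c < int p ^ k"
  shows "(\<lambda>i. c mod int p ^ i) \<in> Zp p" "(\<lambda>i. c mod int p ^ i) k = c"
proof -
  show "(\<lambda>i. c mod int p ^ i) \<in> Zp p"
    unfolding Zp_def using assms
    by (auto simp: mod_mod_cancel le_imp_power_dvd)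
  show "(\<lambda>i. c mod int p ^ i) k = c" using assms by simp
qed

lemma Zp_of_compatible:
  assumes "\<And>k. k \<ge> 1 \<Longrightarrow> 0 \<le> x k \<and> x k < int p ^ k"
    and "\<And>k. k \<ge> 1 \<Longrightarrow> x k = x (Suc k) mod int p ^ k"
  shows "(\<lambda>k. if k = 0 then 0 else x k) \<in> Zp p"
  unfolding Zp_def
proof (intro CollectI allI)
  fix k
  show "0 \<le> (if k = 0 then 0 else x k) \<and> (if k = 0 then 0 else x k) < int p ^ k \<and>
      (if k = 0 then 0 else x k) = (if Suc k = 0 then 0 else x (Suc k)) mod int p ^ k"
    using assms(1)[of k] assms(2)[of k] by (cases k) auto
qed

section \<open>Haar measure on Z_p\<close>

lemma add_mult_div_iff:
  fixes d0 p S c :: nat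
  assumes "d0 < p"
  shows "(d0 + p * S = c) \<longleftrightarrow> (d0 = c mod p \<and> S = c div p)"
proof
  assume h: "d0 + p * S = c"
  have "p > 0" using assms by simp
  then show "d0 = c mod p \<and> S = c div p" using assms h[symmetric] by simp
next
  assume "d0 = c mod p \<and> S = c div p"
  then show "d0 + p * S = c" by simp
qed

lemma digit_sum_eq_iff:
  fixes d :: "nat \<Rightarrow> nat" and p c :: nat
  assumes "\<forall>i<k. d i < p" "c < p ^ k"
  shows "(\<Sum>i<k. d i * p ^ i) = c \<longleftrightarrow> (\<forall>i<k. d i = c div p ^ i mod p)"
  using assms
proof (induction k arbitrary: d c)
  case 0
  then show ?case by simp
next
  case (Suc k)
  have p0: "p > 0" using Suc.prems(1) by auto
  have split: "(\<Sum>i<Suc k. d i * p ^ i) = d 0 + p * (\<Sum>i<k. d (Suc i) * p ^ i)"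
    unfolding sum.lessThan_Suc_shift by (simp add: sum_distrib_left ac_simps)
  have cdiv: "c div p < p ^ k" using Suc.prems(2) p0
    by (simp add: div_less_iff_less_mult mult.commute)
  have IH: "(\<Sum>i<k. d (Suc i) * p ^ i) = c div p \<longleftrightarrow> (\<forall>i<k. d (Suc i) = c div p div p ^ i mod p)"
    using Suc.IH[of "\<lambda>i. d (Suc i)" "c div p"] Suc.prems(1) cdiv by auto
  have "(\<Sum>i<Suc k. d i * p ^ i) = c \<longleftrightarrow> d 0 = c mod p \<and> (\<Sum>i<k. d (Suc i) * p ^ i) = c div p"
    unfolding split using add_mult_div_iff[of "d 0" p] Suc.prems(1) by blast
  also have "\<dots> \<longleftrightarrow> d 0 = c mod p \<and> (\<forall>i<k. d (Suc i) = c div p ^ Suc i mod p)"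
    using IH by (simp add: div_mult2_eq)
  also have "\<dots> \<longleftrightarrow> (\<forall>i<Suc k. d i = c div p ^ i mod p)"
    by (auto simp: less_Suc_eq_0_disj)
  finally show ?case .
qed

lemma digit_sum_less:
  fixes d :: "nat \<Rightarrow> nat" and p :: nat
  assumes "\<forall>i<k. d i < p"
  shows "(\<Sum>i<k. d i * p ^ i) < p ^ k"
  using assms
proof (induction k)
  case 0
  then show ?case by simp
next
  case (Suc k)
  have "(\<Sum>i<Suc k. d i * p ^ i) = (\<Sum>i<k. d i * p ^ i) + d k * p ^ k" by simp
  also have "\<dots> < p ^ k + d k * p ^ k" using Suc by simp
  also have "\<dots> = (1 + d k) * p ^ k" by (simp add: algebra_simps)
  also have "\<dots> \<le> p * p ^ k" using Suc.prems by (intro mult_right_mono) auto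
  finally show ?case by simp
qed

lemma measurable_countable_map2:
  fixes f :: "'a \<Rightarrow> 'b::countable" and g :: "'a \<Rightarrow> 'c::countable"
  assumes "f \<in> measurable M (count_space UNIV)" "g \<in> measurable M (count_space UNIV)"
  shows "(\<lambda>x. F (f x) (g x)) \<in> measurable M (count_space (UNIV :: 'd set))"
proof -
  have "(\<lambda>x. (f x, g x)) \<in> measurable M (count_space UNIV \<Otimes>\<^sub>M count_space UNIV)"
    using assms by (rule measurable_Pair)
  also have "count_space (UNIV::'b set) \<Otimes>\<^sub>M count_space (UNIV::'c set) = count_space (UNIV \<times> UNIV)"
    by (rule pair_measure_countable) auto
  finally have pair: "(\<lambda>x. (f x, g x)) \<in> measurable M (count_space (UNIV \<times> UNIV))" .
  have app: "(\<lambda>z. F (fst z) (snd z)) \<in> measurable (count_space (UNIV \<times> UNIV)) (count_space (UNIV :: 'd set))"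
    by simp
  show ?thesis using measurable_comp[OF pair app] by (simp add: comp_def)
qed

lemma measurable_countable_sum:
  fixes f :: "'i \<Rightarrow> 'a \<Rightarrow> 'b::{countable, comm_monoid_add}"
  assumes "finite I" "\<And>i. i \<in> I \<Longrightarrow> f i \<in> measurable M (count_space UNIV)"
  shows "(\<lambda>x. \<Sum>i\<in>I. f i x) \<in> measurable M (count_space UNIV)"
  using assms
proof (induction I rule: finite_induct)
  case empty
  then show ?case by simp
next
  case (insert i I)
  have "(\<lambda>x. f i x + (\<Sum>i\<in>I. f i x)) \<in> measurable M (count_space UNIV)"
    by (rule measurable_countable_map2) (use insert in auto)
  then show ?case using insert by simp
qed

lemma measurable_countable_map:
  fixes f :: "'a \<Rightarrow> 'b::countable"
  assumes "f \<in> measurable M (count_space UNIV)"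
  shows "(\<lambda>x. F (f x)) \<in> measurable M (count_space (UNIV :: 'd set))"
  using measurable_countable_map2[OF assms assms, of "\<lambda>a b. F a"] by simp

definition digit_space :: "nat \<Rightarrow> (nat \<Rightarrow> nat) measure" where
  "digit_space p = PiM UNIV (\<lambda>_::nat. uniform_count_measure {..<p})"
definition int_seq_space :: "(nat \<Rightarrow> int) measure" where
  "int_seq_space = PiM UNIV (\<lambda>_::nat. count_space (UNIV::int set))"
definition digits_to_Zp :: "nat \<Rightarrow> (nat \<Rightarrow> nat) \<Rightarrow> nat \<Rightarrow> int" where
  "digits_to_Zp p = (\<lambda>d k. int (\<Sum>i<k. d i * p ^ i))"

lemma haar_Zp_eq_distr: "haar_Zp p = distr (digit_space p) (restrict_space int_seq_space (Zp p)) (digits_to_Zp p)"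
  by (simp add: haar_Zp_def digit_space_def int_seq_space_def digits_to_Zp_def)

lemma space_digit_space: "space (digit_space p) = PiE UNIV (\<lambda>_. {..<p})"
  by (simp add: digit_space_def space_PiM space_uniform_count_measure)

lemma space_int_seq_space: "space int_seq_space = UNIV"
  by (auto simp: int_seq_space_def space_PiM PiE_def extensional_def)

lemma digits_to_Zp_in_Zp:
  assumes "p > 0" "d \<in> space (digit_space p)"
  shows "digits_to_Zp p d \<in> Zp p"
proof -
  have dl: "\<forall>i<k. d i < p" for k using assms(2) by (auto simp: space_digit_space)
  have lt: "(\<Sum>i<k. d i * p ^ i) < p ^ k" for k using digit_sum_less[OF dl] .
  have cp: "(\<Sum>i<k. d i * p ^ i) = (\<Sum>i<Suc k. d i * p ^ i) mod p ^ k" for k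
  proof -
    have "(\<Sum>i<Suc k. d i * p ^ i) mod p ^ k = ((\<Sum>i<k. d i * p ^ i) + d k * p ^ k) mod p ^ k"
      by simp
    also have "\<dots> = (\<Sum>i<k. d i * p ^ i) mod p ^ k" by simp
    also have "\<dots> = (\<Sum>i<k. d i * p ^ i)" using lt[of k] by simp
    finally show ?thesis by simp
  qed
  show ?thesis unfolding Zp_def digits_to_Zp_def mem_Collect_eq
  proof (intro allI conjI)
    fix k
    show "0 \<le> int (\<Sum>i<k. d i * p ^ i)" by (rule of_nat_0_le_iff)
    show "int (\<Sum>i<k. d i * p ^ i) < int p ^ k" using lt[of k]
      by (metis of_nat_less_iff of_nat_power)
    show "int (\<Sum>i<k. d i * p ^ i) = int (\<Sum>i<Suc k. d i * p ^ i) mod int p ^ k"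
      using cp[of k] by (metis of_nat_mod of_nat_power)
  qed
qed

lemma digit_measurable: "(\<lambda>d. d i) \<in> measurable (digit_space (p::nat)) (count_space UNIV)"
proof -
  have coord: "(\<lambda>d. d i) \<in> measurable (digit_space p) (uniform_count_measure {..<p})"
    unfolding digit_space_def by (rule measurable_component_singleton) simp
  have inclusion: "(\<lambda>x::nat. x) \<in> measurable (uniform_count_measure {..<p}) (count_space (UNIV::nat set))"
    by (subst measurable_cong_sets[OF sets_uniform_count_measure_count_space refl]) simp
  show ?thesis using measurable_comp[OF coord inclusion] by (simp add: comp_def)
qed

lemma digits_to_Zp_measurable:
  assumes "p > 0"
  shows "digits_to_Zp p \<in> measurable (digit_space p) (restrict_space int_seq_space (Zp p))"
proof (rule measurable_restrict_space2)
  show "digits_to_Zp p \<in> space (digit_space p) \<rightarrow> Zp p" using digits_to_Zp_in_Zp[OF assms] by blast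
  show "digits_to_Zp p \<in> measurable (digit_space p) int_seq_space"
    unfolding int_seq_space_def
  proof (rule measurable_PiM_single')
    fix k :: nat
    have "(\<lambda>d. \<Sum>i<k. d i * p ^ i) \<in> measurable (digit_space p) (count_space UNIV)"
      by (rule measurable_countable_sum) (auto intro: measurable_countable_map[OF digit_measurable])
    then show "(\<lambda>d. digits_to_Zp p d k) \<in> measurable (digit_space p) (count_space UNIV)"
      unfolding digits_to_Zp_def by (rule measurable_countable_map)
  qed (auto simp: PiE_def extensional_def)
qed

lemma prob_space_digit_space: "(p::nat) > 0 \<Longrightarrow> prob_space (digit_space p)"
  unfolding digit_space_def by (rule prob_space_PiM) (auto intro!: prob_space_uniform_count_measure simp: lessThan_empty_iff)

lemma prob_space_haar_Zp: "p > 0 \<Longrightarrow> prob_space (haar_Zp p)"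
  unfolding haar_Zp_eq_distr by (rule prob_space.prob_space_distr[OF prob_space_digit_space digits_to_Zp_measurable])

lemma space_haar_Zp: "space (haar_Zp p) = Zp p"
  by (simp add: haar_Zp_eq_distr space_restrict_space space_int_seq_space)

lemma sets_haar_Zp: "sets (haar_Zp p) = sets (restrict_space int_seq_space (Zp p))"
  by (simp add: haar_Zp_eq_distr)

lemma residue_measurable: "(\<lambda>x. x k) \<in> measurable (haar_Zp p) (count_space UNIV)"
  unfolding measurable_cong_sets[OF sets_haar_Zp refl]
  by (rule measurable_restrict_space1) (unfold int_seq_space_def, rule measurable_component_singleton, simp)

lemma Zp_residue_set_sets: "{x \<in> Zp p. x k \<in> S} \<in> sets (haar_Zp p)"
proof -
  have "(\<lambda>x. x k) -` S \<inter> space (haar_Zp p) \<in> sets (haar_Zp p)"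
    by (rule measurable_sets[OF residue_measurable]) simp
  also have "(\<lambda>x. x k) -` S \<inter> space (haar_Zp p) = {x \<in> Zp p. x k \<in> S}"
    by (auto simp: space_haar_Zp)
  finally show ?thesis .
qed

lemma emeasure_haar_Zp_residue:
  assumes p: "p > 0" and c: "0 \<le> c" "c < int p ^ k"
  shows "emeasure (haar_Zp p) {x \<in> Zp p. x k = c} = ennreal (1 / real p) ^ k"
proof -
  define A where "A = {x \<in> Zp p. x k = c}"
  have A: "A \<in> sets (restrict_space int_seq_space (Zp p))"
    using Zp_residue_set_sets[of p k "{c}"] unfolding A_def sets_haar_Zp by simp
  have "emeasure (haar_Zp p) A = emeasure (digit_space p) (digits_to_Zp p -` A \<inter> space (digit_space p))"
    unfolding haar_Zp_eq_distr by (rule emeasure_distr[OF digits_to_Zp_measurable[OF p] A])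
  also have "digits_to_Zp p -` A \<inter> space (digit_space p) =
      prod_emb UNIV (\<lambda>_. uniform_count_measure {..<p}) {..<k} (PiE {..<k} (\<lambda>i. {nat c div p ^ i mod p}))"
  proof -
    have "d \<in> digits_to_Zp p -` A \<longleftrightarrow> (\<forall>i<k. d i = nat c div p ^ i mod p)" if d: "d \<in> space (digit_space p)" for d
    proof -
      have e: "digits_to_Zp p d k = int (\<Sum>i<k. d i * p ^ i)" by (simp only: digits_to_Zp_def)
      have "d \<in> digits_to_Zp p -` A \<longleftrightarrow> digits_to_Zp p d k = c"
        using digits_to_Zp_in_Zp[OF p d] unfolding A_def by simp
      also have "\<dots> \<longleftrightarrow> (\<Sum>i<k. d i * p ^ i) = nat c"
        unfolding e using c(1) int_eq_iff by blast
      also have "\<dots> \<longleftrightarrow> (\<forall>i<k. d i = nat c div p ^ i mod p)"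
      proof (rule digit_sum_eq_iff)
        show "\<forall>i<k. d i < p" using d by (auto simp: space_digit_space)
        show "nat c < p ^ k" using c by (metis nat_less_iff of_nat_power)
      qed
      finally show ?thesis .
    qed
    then show ?thesis
      by (auto simp: prod_emb_def space_digit_space PiE_iff restrict_def space_uniform_count_measure extensional_def)
  qed
  also have "emeasure (digit_space p) \<dots> = (\<Prod>i<k. emeasure (uniform_count_measure {..<p}) {nat c div p ^ i mod p})"
    unfolding digit_space_def
    by (rule emeasure_PiM_emb) (use p in \<open>auto intro!: prob_space_uniform_count_measure simp: sets_uniform_count_measure\<close>)
  also have "\<dots> = (\<Prod>i<k. ennreal (1 / real p))"
    using p by (intro prod.cong refl) (simp add: emeasure_uniform_count_measure)
  also have "\<dots> = ennreal (1 / real p) ^ k" by simp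
  finally show ?thesis unfolding A_def .
qed

section \<open>Cylinders in finite products of Z_p\<close>

definition Zp_tuples :: "nat \<Rightarrow> 'i set \<Rightarrow> ('i \<Rightarrow> nat \<Rightarrow> int) set" where
  "Zp_tuples p I = PiE I (\<lambda>_. Zp p)"

definition residue_cyl :: "nat \<Rightarrow> 'i set \<Rightarrow> nat \<Rightarrow> ('i \<Rightarrow> int) \<Rightarrow> ('i \<Rightarrow> nat \<Rightarrow> int) set" where
  "residue_cyl p I k c = {f \<in> Zp_tuples p I. \<forall>j\<in>I. f j k = c j}"

text \<open>The empty set is added to make the family of cylinders closed under intersection.\<close>

definition residue_cyls :: "nat \<Rightarrow> 'i set \<Rightarrow> nat \<Rightarrow> ('i \<Rightarrow> nat \<Rightarrow> int) set set" where
  "residue_cyls p I K = {residue_cyl p I k c | k c. K \<le> k} \<union> {{}}"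

definition level_determined :: "nat \<Rightarrow> 'i set \<Rightarrow> nat \<Rightarrow> ('i \<Rightarrow> nat \<Rightarrow> int) set \<Rightarrow> bool" where
  "level_determined p I K T \<longleftrightarrow> (\<forall>f\<in>Zp_tuples p I. \<forall>f'\<in>Zp_tuples p I. (\<forall>j\<in>I. f j K = f' j K) \<longrightarrow> (f \<in> T \<longleftrightarrow> f' \<in> T))"

abbreviation haar_PiM :: "nat \<Rightarrow> 'i set \<Rightarrow> ('i \<Rightarrow> nat \<Rightarrow> int) measure" where
  "haar_PiM p I \<equiv> PiM I (\<lambda>_. haar_Zp p)"

lemma space_haar_PiM: "space (haar_PiM p I) = Zp_tuples p I"
  by (simp add: space_PiM space_haar_Zp Zp_tuples_def)

lemma Zp_tuples_eqI:
  assumes f: "f \<in> Zp_tuples p I" and f': "f' \<in> Zp_tuples p I"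
    and eq: "\<And>j k. j \<in> I \<Longrightarrow> k \<ge> 1 \<Longrightarrow> f j k = f' j k"
  shows "f = f'"
proof
  fix j show "f j = f' j"
  proof (cases "j \<in> I")
    case True
    then show ?thesis using f f' eq by (intro Zp_eqI) (auto simp: Zp_tuples_def)
  next
    case False
    then show ?thesis using f f' by (auto simp: Zp_tuples_def PiE_def extensional_def)
  qed
qed

lemma residue_cyl_PiE: "residue_cyl p I k c = PiE I (\<lambda>j. {x \<in> Zp p. x k = c j})"
  unfolding residue_cyl_def Zp_tuples_def by (auto simp: PiE_def Pi_def)

lemma residue_cyl_sets: "finite I \<Longrightarrow> residue_cyl p I k c \<in> sets (haar_PiM p I)"
  unfolding residue_cyl_PiE
  by (rule sets_PiM_I_finite) (use Zp_residue_set_sets[of p k "{_}"] in auto)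

lemma emeasure_residue_cyl:
  assumes p: "p > 0" and I: "finite I" and c: "\<And>j. j \<in> I \<Longrightarrow> 0 \<le> c j \<and> c j < int p ^ k"
  shows "emeasure (haar_PiM p I) (residue_cyl p I k c) = ennreal (1 / real p) ^ (k * card I)"
proof -
  interpret product_sigma_finite "\<lambda>_::'a. haar_Zp p"
    unfolding product_sigma_finite_def
    using prob_space_haar_Zp[OF p] by (simp add: prob_space_imp_sigma_finite)
  have "emeasure (haar_PiM p I) (residue_cyl p I k c) = (\<Prod>j\<in>I. emeasure (haar_Zp p) {x \<in> Zp p. x k = c j})"
    unfolding residue_cyl_PiE by (rule emeasure_PiM[OF I]) (use Zp_residue_set_sets[of p k "{_}"] in auto)
  also have "\<dots> = (\<Prod>j\<in>I. ennreal (1 / real p) ^ k)"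
    by (intro prod.cong refl) (use c emeasure_haar_Zp_residue[OF p] in auto)
  also have "\<dots> = ennreal (1 / real p) ^ (k * card I)"
    by (simp add: power_mult)
  finally show ?thesis .
qed

lemma residue_cyl_Int:
  assumes "k \<le> k'"
  shows "residue_cyl p I k c \<inter> residue_cyl p I k' c' = (if \<forall>j\<in>I. c' j mod int p ^ k = c j then residue_cyl p I k' c' else {})"
proof -
  have comp: "f j k = f j k' mod int p ^ k" if "f \<in> Zp_tuples p I" "j \<in> I" for f j
    using Zp_compat[OF _ assms] that by (auto simp: Zp_tuples_def)
  show ?thesis
  proof (cases "\<forall>j\<in>I. c' j mod int p ^ k = c j")
    case True
    have "residue_cyl p I k' c' \<subseteq> residue_cyl p I k c"
    proof
      fix f assume f: "f \<in> residue_cyl p I k' c'"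
      have "f j k = c j" if j: "j \<in> I" for j
      proof -
        have "f j k = f j k' mod int p ^ k" using comp[of f j] f j by (simp add: residue_cyl_def)
        also have "\<dots> = c' j mod int p ^ k" using f j by (simp add: residue_cyl_def)
        also have "\<dots> = c j" using True j by simp
        finally show ?thesis .
      qed
      then show "f \<in> residue_cyl p I k c" using f by (simp add: residue_cyl_def)
    qed
    then show ?thesis using True by auto
  next
    case False
    then obtain j where j: "j \<in> I" "c' j mod int p ^ k \<noteq> c j" by auto
    have "f \<notin> residue_cyl p I k c \<inter> residue_cyl p I k' c'" for f
    proof
      assume f: "f \<in> residue_cyl p I k c \<inter> residue_cyl p I k' c'"
      have "f j k = f j k' mod int p ^ k" using comp[of f j] f j by (simp add: residue_cyl_def)
      also have "\<dots> = c' j mod int p ^ k" using f j by (simp add: residue_cyl_def)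
      finally have "f j k \<noteq> c j" using j by simp
      then show False using f j by (simp add: residue_cyl_def)
    qed
    then show ?thesis using False by auto
  qed
qed

lemma Int_stable_residue_cyls: "Int_stable (residue_cyls p I K)"
  unfolding Int_stable_def
proof (intro ballI)
  fix a b assume a: "a \<in> residue_cyls p I K" and b: "b \<in> residue_cyls p I K"
  show "a \<inter> b \<in> residue_cyls p I K"
  proof (cases "a = {} \<or> b = {}")
    case True
    then show ?thesis by (auto simp: residue_cyls_def)
  next
    case False
    then obtain k c k' c' where a': "a = residue_cyl p I k c" "K \<le> k" and b': "b = residue_cyl p I k' c'" "K \<le> k'"
      using a b by (auto simp: residue_cyls_def)
    show ?thesis
    proof (cases "k \<le> k'")
      case True
      then show ?thesis using residue_cyl_Int[OF True, of p I c c'] a' b' by (auto simp: residue_cyls_def)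
    next
      case False
      then have kk: "k' \<le> k" by simp
      show ?thesis using residue_cyl_Int[OF kk, of p I c' c] a' b' by (auto simp: residue_cyls_def Int_commute)
    qed
  qed
qed

lemma residue_cyls_subset: "residue_cyls p I K \<subseteq> Pow (Zp_tuples p I)"
  by (auto simp: residue_cyls_def residue_cyl_def)

lemma Union_residue_cyl:
  "\<Union>(residue_cyl p I K ` PiE I (\<lambda>_. {0..<int p ^ K})) = Zp_tuples p I"
proof
  show "\<Union>(residue_cyl p I K ` PiE I (\<lambda>_. {0..<int p ^ K})) \<subseteq> Zp_tuples p I" by (auto simp: residue_cyl_def)
  show "Zp_tuples p I \<subseteq> \<Union>(residue_cyl p I K ` PiE I (\<lambda>_. {0..<int p ^ K}))"
  proof
    fix f assume f: "f \<in> Zp_tuples p I"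
    then have "restrict (\<lambda>j. f j K) I \<in> PiE I (\<lambda>_. {0..<int p ^ K})"
      using Zp_memD(1,2) by (force simp: Zp_tuples_def PiE_iff)
    moreover have "f \<in> residue_cyl p I K (restrict (\<lambda>j. f j K) I)" using f by (auto simp: residue_cyl_def)
    ultimately show "f \<in> \<Union>(residue_cyl p I K ` PiE I (\<lambda>_. {0..<int p ^ K}))" by blast
  qed
qed

lemma residue_set_in_sigma:
  assumes I: "finite I" and i: "i \<in> I"
  shows "{f \<in> Zp_tuples p I. f i k \<in> S} \<in> sigma_sets (Zp_tuples p I) (residue_cyls p I K)"
proof -
  define K' where "K' = max k K"
  define C where "C = {c \<in> PiE I (\<lambda>_. {0..<int p ^ K'}). c i mod int p ^ k \<in> S}"
  have fin: "finite C" unfolding C_def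
    by (rule finite_subset[of _ "PiE I (\<lambda>_. {0..<int p ^ K'})"]) (use I in \<open>auto intro: finite_PiE\<close>)
  have comp: "f j k = f j K' mod int p ^ k" if "f \<in> Zp_tuples p I" "j \<in> I" for f j
    using Zp_compat[of "f j" p k K'] that by (auto simp: Zp_tuples_def K'_def)
  have eq: "{f \<in> Zp_tuples p I. f i k \<in> S} = \<Union>(residue_cyl p I K' ` C)"
  proof
    show "{f \<in> Zp_tuples p I. f i k \<in> S} \<subseteq> \<Union>(residue_cyl p I K' ` C)"
    proof
      fix f assume f: "f \<in> {f \<in> Zp_tuples p I. f i k \<in> S}"
      then have "restrict (\<lambda>j. f j K') I \<in> C"
        using Zp_memD(1,2) comp[of f i] i by (force simp: Zp_tuples_def PiE_iff C_def)
      moreover have "f \<in> residue_cyl p I K' (restrict (\<lambda>j. f j K') I)" using f by (auto simp: residue_cyl_def)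
      ultimately show "f \<in> \<Union>(residue_cyl p I K' ` C)" by blast
    qed
    show "\<Union>(residue_cyl p I K' ` C) \<subseteq> {f \<in> Zp_tuples p I. f i k \<in> S}"
    proof
      fix f assume "f \<in> \<Union>(residue_cyl p I K' ` C)"
      then obtain c where c: "c \<in> C" "f \<in> residue_cyl p I K' c" by auto
      have "f i k = f i K' mod int p ^ k" using comp[of f i] c i by (simp add: residue_cyl_def)
      also have "\<dots> = c i mod int p ^ k" using c i by (simp add: residue_cyl_def)
      finally show "f \<in> {f \<in> Zp_tuples p I. f i k \<in> S}" using c by (auto simp: C_def residue_cyl_def)
    qed
  qed
  have "\<Union>(residue_cyl p I K' ` C) \<in> sigma_sets (Zp_tuples p I) (residue_cyls p I K)"
  proof (rule sigma_sets_UNION)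
    show "countable (residue_cyl p I K' ` C)" using fin by (simp add: countable_finite)
    show "\<And>b. b \<in> residue_cyl p I K' ` C \<Longrightarrow> b \<in> sigma_sets (Zp_tuples p I) (residue_cyls p I K)"
      by (rule sigma_sets.Basic) (auto simp: residue_cyls_def K'_def)
  qed
  then show ?thesis using eq by simp
qed

lemma sets_haar_PiM_residue_cyls:
  assumes I: "finite I"
  shows "sets (haar_PiM p I) = sigma_sets (Zp_tuples p I) (residue_cyls p I K)"
proof
  show "sigma_sets (Zp_tuples p I) (residue_cyls p I K) \<subseteq> sets (haar_PiM p I)"
    unfolding space_haar_PiM[symmetric]
    by (rule sets.sigma_sets_subset) (auto simp: residue_cyls_def intro: residue_cyl_sets[OF I])
  have zc: "sets int_seq_space = sigma_sets UNIV {{f \<in> UNIV. f k \<in> A} | k A. A \<in> sets (count_space (UNIV::int set))}"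
    unfolding int_seq_space_def sets_PiM_single by (simp add: PiE_def extensional_def)
  have main: "{f \<in> Zp_tuples p I. f i \<in> A0} \<in> sigma_sets (Zp_tuples p I) (residue_cyls p I K)"
    if i: "i \<in> I" and A0: "A0 \<in> sigma_sets UNIV {{f \<in> UNIV. f k \<in> A} | k A. A \<in> sets (count_space (UNIV::int set))}" for i A0
    using A0
  proof (induction rule: sigma_sets.induct)
    case (Basic a)
    then obtain k A where "a = {f \<in> UNIV. f k \<in> A}" by auto
    then have "{f \<in> Zp_tuples p I. f i \<in> a} = {f \<in> Zp_tuples p I. f i k \<in> A}" by auto
    then show ?case using residue_set_in_sigma[OF I i] by simp
  next
    case Empty
    then show ?case by (simp add: sigma_sets.Empty)
  next
    case (Compl a)
    have "{f \<in> Zp_tuples p I. f i \<in> UNIV - a} = Zp_tuples p I - {f \<in> Zp_tuples p I. f i \<in> a}" by auto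
    then show ?case using sigma_sets.Compl[OF Compl.IH] by simp
  next
    case (Union a)
    have "{f \<in> Zp_tuples p I. f i \<in> \<Union>(range a)} = (\<Union>n. {f \<in> Zp_tuples p I. f i \<in> a n})" by auto
    then show ?case using sigma_sets.Union[of "\<lambda>n. {f \<in> Zp_tuples p I. f i \<in> a n}"] Union.IH by simp
  qed
  show "sets (haar_PiM p I) \<subseteq> sigma_sets (Zp_tuples p I) (residue_cyls p I K)"
    unfolding sets_PiM_single space_haar_Zp Zp_tuples_def[symmetric]
  proof (rule sigma_sets_mono)
    show "{{f \<in> Zp_tuples p I. f i \<in> A} |i A. i \<in> I \<and> A \<in> sets (haar_Zp p)}
          \<subseteq> sigma_sets (Zp_tuples p I) (residue_cyls p I K)"
    proof clarify
      fix i A assume i: "i \<in> I" and A: "A \<in> sets (haar_Zp p)"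
      then obtain A0 where A0: "A0 \<in> sets int_seq_space" "A = Zp p \<inter> A0"
        unfolding sets_haar_Zp sets_restrict_space by auto
      have "{f \<in> Zp_tuples p I. f i \<in> A} = {f \<in> Zp_tuples p I. f i \<in> A0}"
        using i A0(2) by (auto simp: Zp_tuples_def)
      then show "{f \<in> Zp_tuples p I. f i \<in> A} \<in> sigma_sets (Zp_tuples p I) (residue_cyls p I K)"
        using main[OF i] A0(1) unfolding zc by simp
    qed
  qed
qed

lemma level_determined_residue_cyl:
  assumes "level_determined p I K T" "K \<le> k"
  shows "residue_cyl p I k c \<subseteq> T \<or> residue_cyl p I k c \<inter> T = {}"
proof (rule ccontr)
  assume "\<not> ?thesis"
  then obtain f f' where f: "f \<in> residue_cyl p I k c" "f \<notin> T" and f': "f' \<in> residue_cyl p I k c" "f' \<in> T" by auto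
  have "\<forall>j\<in>I. f j K = f' j K"
  proof
    fix j assume j: "j \<in> I"
    have "f j K = f j k mod int p ^ K" "f' j K = f' j k mod int p ^ K"
      using Zp_compat[of "f j" p K k] Zp_compat[of "f' j" p K k] assms(2) f(1) f'(1) j by (auto simp: residue_cyl_def Zp_tuples_def)
    moreover have "f j k = c j" "f' j k = c j" using f(1) f'(1) j by (auto simp: residue_cyl_def)
    ultimately show "f j K = f' j K" by simp
  qed
  then show False using assms(1) f f' unfolding level_determined_def residue_cyl_def by blast
qed

lemma level_determined_sets:
  assumes I: "finite I" and T: "level_determined p I K T"
  shows "T \<inter> Zp_tuples p I \<in> sets (haar_PiM p I)"
proof -
  define C where "C = {c \<in> PiE I (\<lambda>_. {0..<int p ^ K}). residue_cyl p I K c \<subseteq> T}"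
  have "T \<inter> Zp_tuples p I = \<Union>(residue_cyl p I K ` C)"
  proof
    show "T \<inter> Zp_tuples p I \<subseteq> \<Union>(residue_cyl p I K ` C)"
    proof
      fix f assume f: "f \<in> T \<inter> Zp_tuples p I"
      have fc: "f \<in> residue_cyl p I K (restrict (\<lambda>j. f j K) I)" using f by (auto simp: residue_cyl_def)
      then have "residue_cyl p I K (restrict (\<lambda>j. f j K) I) \<subseteq> T"
        using level_determined_residue_cyl[OF T order_refl, of "restrict (\<lambda>j. f j K) I"] f by blast
      moreover have "restrict (\<lambda>j. f j K) I \<in> PiE I (\<lambda>_. {0..<int p ^ K})"
        using f Zp_memD(1,2) by (force simp: Zp_tuples_def PiE_iff)
      ultimately show "f \<in> \<Union>(residue_cyl p I K ` C)" using fc unfolding C_def by blast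
    qed
    show "\<Union>(residue_cyl p I K ` C) \<subseteq> T \<inter> Zp_tuples p I" by (auto simp: C_def residue_cyl_def)
  qed
  moreover have "\<Union>(residue_cyl p I K ` C) \<in> sets (haar_PiM p I)"
  proof (intro sets.finite_UN)
    show "finite C" unfolding C_def
      by (rule finite_subset[of _ "PiE I (\<lambda>_. {0..<int p ^ K})"]) (use I in \<open>auto intro: finite_PiE\<close>)
  qed (use I in \<open>auto intro: residue_cyl_sets\<close>)
  ultimately show ?thesis by simp
qed

lemma level_determinedI:
  assumes "\<And>f f'. f \<in> Zp_tuples p I \<Longrightarrow> f' \<in> Zp_tuples p I \<Longrightarrow> (\<forall>j\<in>I. \<forall>l\<le>K. f j l = f' j l) \<Longrightarrow> f \<in> T \<Longrightarrow> f' \<in> T"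
  shows "level_determined p I K T"
  unfolding level_determined_def
proof (intro ballI impI)
  fix f f' assume f: "f \<in> Zp_tuples p I" "f' \<in> Zp_tuples p I" and eq: "\<forall>j\<in>I. f j K = f' j K"
  have all: "\<forall>j\<in>I. \<forall>l\<le>K. f j l = f' j l"
  proof (intro ballI allI impI)
    fix j l assume j: "j \<in> I" and l: "l \<le> K"
    have "f j l = f j K mod int p ^ l" "f' j l = f' j K mod int p ^ l"
      using Zp_compat[of "f j" p l K] Zp_compat[of "f' j" p l K] f j l by (auto simp: Zp_tuples_def)
    then show "f j l = f' j l" using eq j by simp
  qed
  moreover have "\<forall>j\<in>I. \<forall>l\<le>K. f' j l = f j l" using all by simp
  ultimately show "f \<in> T \<longleftrightarrow> f' \<in> T" using assms f by blast
qed

lemma level_determined_conj: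
  assumes "level_determined p I K A" "level_determined p I K {f. P f}"
  shows "level_determined p I K {f \<in> A. P f}"
  using assms unfolding level_determined_def by blast

section \<open>Uniqueness of monic factorisations modulo p^k\<close>

definition coeffs_dvd :: "int \<Rightarrow> int poly \<Rightarrow> bool" where
  "coeffs_dvd q P \<longleftrightarrow> (\<forall>i. q dvd coeff P i)"

lemma coeffs_dvd_add: "coeffs_dvd q P \<Longrightarrow> coeffs_dvd q Q \<Longrightarrow> coeffs_dvd q (P + Q)"
  by (simp add: coeffs_dvd_def)

lemma coeffs_dvd_diff: "coeffs_dvd q P \<Longrightarrow> coeffs_dvd q Q \<Longrightarrow> coeffs_dvd q (P - Q)"
  by (simp add: coeffs_dvd_def)

lemma coeffs_dvd_minus: "coeffs_dvd q P \<Longrightarrow> coeffs_dvd q (- P)"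
  by (simp add: coeffs_dvd_def)

lemma coeffs_dvd_mult_right: "coeffs_dvd q P \<Longrightarrow> coeffs_dvd q (P * Q)"
  by (simp add: coeffs_dvd_def coeff_mult dvd_sum)

lemma coeffs_dvd_mult_left: "coeffs_dvd q P \<Longrightarrow> coeffs_dvd q (Q * P)"
  by (simp add: coeffs_dvd_def coeff_mult dvd_sum)

lemma coeffs_dvd_smult: "coeffs_dvd q (smult q X)"
  by (simp add: coeffs_dvd_def)

lemma coeffs_dvd_trans: "q' dvd q \<Longrightarrow> coeffs_dvd q P \<Longrightarrow> coeffs_dvd q' P"
  by (auto simp: coeffs_dvd_def intro: dvd_trans)

lemma coeffs_dvd_smult_cancel: "q \<noteq> 0 \<Longrightarrow> coeffs_dvd (q * r) (smult q X) \<Longrightarrow> coeffs_dvd r X"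
  by (simp add: coeffs_dvd_def)

lemma coeffs_dvdE:
  assumes "coeffs_dvd q P" "q \<noteq> 0"
  obtains U where "P = smult q U" "\<And>i. coeff P i = 0 \<Longrightarrow> coeff U i = 0"
proof -
  define U where "U = map_poly (\<lambda>c. c div q) P"
  have cU: "coeff U i = coeff P i div q" for i unfolding U_def by (simp add: coeff_map_poly)
  have "P = smult q U"
    by (rule poly_eqI) (use assms in \<open>auto simp: cU coeffs_dvd_def\<close>)
  moreover have "coeff U i = 0" if "coeff P i = 0" for i using that by (simp add: cU)
  ultimately show ?thesis using that by blast
qed

lemma monic_mult_add_coeffs_dvd:
  assumes G: "degree G = m" "coeff G m = 1" and U: "\<And>i. i \<ge> m \<Longrightarrow> coeff U i = 0"
    and dv: "coeffs_dvd p (U + G * V)" and p: "p \<noteq> 0"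
  shows "coeffs_dvd p U \<and> coeffs_dvd p V"
proof -
  obtain W where W: "U + G * V = smult p W"
    using coeffs_dvdE[OF dv p] by blast
  have G0: "G \<noteq> 0" using G by auto
  obtain Q R where QR: "pseudo_divmod W G = (Q, R)" by (cases "pseudo_divmod W G") auto
  have "smult (coeff G (degree G) ^ (Suc (degree W) - degree G)) W = G * Q + R"
    by (rule pseudo_divmod(1)[OF G0 QR])
  then have WQR: "W = G * Q + R" using G by simp
  have "R = 0 \<or> degree R < degree G" by (rule pseudo_divmod(2)[OF G0 QR])
  then have lR: "coeff R i = 0" if "i \<ge> m" for i using G that by (auto simp: coeff_eq_0)
  define Y where "Y = V - smult p Q"
  have GY: "G * Y = smult p R - U"
  proof -
    have "G * Y = G * V - smult p (G * Q)" by (simp add: Y_def algebra_simps)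
    also have "\<dots> = (smult p W - U) - smult p (W - R)" using W WQR by (simp add: algebra_simps)
    also have "\<dots> = smult p R - U" by (simp add: algebra_simps smult_diff_right)
    finally show ?thesis .
  qed
  have lGY: "coeff (G * Y) i = 0" if "i \<ge> m" for i using lR U that unfolding GY by simp
  have Y0: "Y = 0"
  proof (rule ccontr)
    assume "Y \<noteq> 0"
    then have "coeff (G * Y) (degree G + degree Y) \<noteq> 0"
      using coeff_mult_degree_sum[of G Y] G by simp
    moreover have "degree G + degree Y \<ge> m" using G by simp
    ultimately show False using lGY by simp
  qed
  have "V = smult p Q" using Y0 by (simp add: Y_def)
  moreover have "U = smult p R" using GY Y0 by simp
  ultimately show ?thesis by (simp add: coeffs_dvd_smult)
qed

lemma monic_factors_unique_mod_prime:
  assumes H1: "coeffs_dvd p (H1 - 1)" and H2: "coeffs_dvd p (H2 - 1)"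
    and dv: "coeffs_dvd p (G1 * H1 - G2 * H2)"
  shows "coeffs_dvd p (G1 - G2) \<and> coeffs_dvd p (H1 - H2)"
proof
  have "G1 - G2 = (G1 * H1 - G2 * H2) - G1 * (H1 - 1) + G2 * (H2 - 1)"
    by (simp add: algebra_simps)
  then show "coeffs_dvd p (G1 - G2)"
    using coeffs_dvd_mult_left[OF H1] coeffs_dvd_mult_left[OF H2] dv
    by (metis coeffs_dvd_add coeffs_dvd_diff)
  show "coeffs_dvd p (H1 - H2)"
    using coeffs_dvd_diff[OF H1 H2] by (simp add: algebra_simps)
qed

lemma monic_factors_unique_lift:
  assumes G1: "degree G1 = m" "coeff G1 m = 1" and G2: "degree G2 = m" "coeff G2 m = 1"
    and H1: "coeffs_dvd p (H1 - 1)" and p: "p \<noteq> 0" and k: "k \<ge> 1"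
    and G: "coeffs_dvd (p ^ k) (G1 - G2)" and H: "coeffs_dvd (p ^ k) (H1 - H2)"
    and dv: "coeffs_dvd (p ^ Suc k) (G1 * H1 - G2 * H2)"
  shows "coeffs_dvd (p ^ Suc k) (G1 - G2) \<and> coeffs_dvd (p ^ Suc k) (H1 - H2)"
proof -
  have pk: "p ^ k \<noteq> 0" using p by simp
  obtain U where U: "G2 - G1 = smult (p ^ k) U" "\<And>i. coeff (G2 - G1) i = 0 \<Longrightarrow> coeff U i = 0"
    using coeffs_dvdE[OF coeffs_dvd_minus[OF G] pk] by auto
  obtain V where V: "H2 - H1 = smult (p ^ k) V"
    using coeffs_dvdE[OF coeffs_dvd_minus[OF H] pk] by auto
  have U_low: "coeff U i = 0" if "m \<le> i" for i
    using U(2) G1 G2 that by (cases "i = m") (auto simp: coeff_eq_0)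
  \<comment> \<open>Substituting G2 = G1 + p^k U and H2 = H1 + p^k V, the quadratic term vanishes mod p^(k+1).\<close>
  have "G2 = G1 + smult (p ^ k) U" "H2 = H1 + smult (p ^ k) V"
    using U(1) V by (simp_all add: algebra_simps)
  then have "G1 * H1 - G2 * H2 = - smult (p ^ k) (U * H1 + G1 * V) - smult (p ^ k * p ^ k) (U * V)"
    by (simp add: algebra_simps smult_add_right)
  then have expand: "smult (p ^ k) (U * H1 + G1 * V) =
      - ((G1 * H1 - G2 * H2) + smult (p ^ k * p ^ k) (U * V))"
    by simp
  have "p ^ Suc k dvd p ^ (k + k)" using k by (intro le_imp_power_dvd) simp
  then have "p ^ Suc k dvd p ^ k * p ^ k" by (simp add: power_add)
  then have "coeffs_dvd (p ^ Suc k) (smult (p ^ k * p ^ k) (U * V))"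
    by (rule coeffs_dvd_trans[OF _ coeffs_dvd_smult])
  then have "coeffs_dvd (p ^ k * p) (smult (p ^ k) (U * H1 + G1 * V))"
    unfolding expand power_Suc2[symmetric] by (intro coeffs_dvd_minus coeffs_dvd_add dv)
  then have "coeffs_dvd p (U * H1 + G1 * V)"
    by (rule coeffs_dvd_smult_cancel[OF pk])
  moreover have "U * H1 + G1 * V = (U + G1 * V) + U * (H1 - 1)" by (simp add: algebra_simps)
  ultimately have "coeffs_dvd p (U + G1 * V)"
    using coeffs_dvd_mult_left[OF H1, of U] by (metis add_diff_cancel coeffs_dvd_diff)
  then have UV: "coeffs_dvd p U" "coeffs_dvd p V"
    using monic_mult_add_coeffs_dvd[OF G1 U_low _ p] by auto
  have "G1 - G2 = - smult (p ^ k) U" "H1 - H2 = - smult (p ^ k) V"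
    using U(1) V by (simp_all add: algebra_simps)
  then show ?thesis using UV by (simp add: coeffs_dvd_def mult_dvd_mono)
qed

lemma monic_factors_unique_mod_pow:
  assumes G1: "degree G1 = m" "coeff G1 m = 1" and G2: "degree G2 = m" "coeff G2 m = 1"
    and H1: "coeffs_dvd p (H1 - 1)" and H2: "coeffs_dvd p (H2 - 1)" and p: "p \<noteq> 0"
    and k: "k \<ge> 1" and dv: "coeffs_dvd (p ^ k) (G1 * H1 - G2 * H2)"
  shows "coeffs_dvd (p ^ k) (G1 - G2) \<and> coeffs_dvd (p ^ k) (H1 - H2)"
  using k dv
proof (induction k rule: dec_induct)
  case base
  then show ?case using monic_factors_unique_mod_prime[OF H1 H2] by simp
next
  case (step k)
  have "coeffs_dvd (p ^ k) (G1 * H1 - G2 * H2)"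
    by (rule coeffs_dvd_trans[OF _ step.prems]) (simp add: le_imp_power_dvd)
  then show ?case
    using step.IH monic_factors_unique_lift[OF G1 G2 H1 p step.hyps(1) _ _ step.prems] by blast
qed

section \<open>Multiplication of residues at level k\<close>

definition monic_poly :: "nat \<Rightarrow> (nat \<Rightarrow> int) \<Rightarrow> int poly" where
  "monic_poly m \<alpha> = monom 1 m + (\<Sum>a<m. monom (\<alpha> a) a)"

definition trunc_poly :: "nat \<Rightarrow> (nat \<Rightarrow> int) \<Rightarrow> int poly" where
  "trunc_poly d \<beta> = (\<Sum>b\<le>d. monom (\<beta> b) b)"

lemma coeff_monic_poly: "coeff (monic_poly m \<alpha>) i = (if i < m then \<alpha> i else if i = m then 1 else 0)"
  unfolding monic_poly_def by (auto simp: coeff_sum)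

lemma coeff_trunc_poly: "coeff (trunc_poly d \<beta>) i = (if i \<le> d then \<beta> i else 0)"
  unfolding trunc_poly_def by (auto simp: coeff_sum)

lemma degree_monic_poly: "degree (monic_poly m \<alpha>) = m"
proof (rule antisym)
  show "degree (monic_poly m \<alpha>) \<le> m" by (rule degree_le) (simp add: coeff_monic_poly)
  show "m \<le> degree (monic_poly m \<alpha>)" by (rule le_degree) (simp add: coeff_monic_poly)
qed

lemma coeff_monic_poly_degree: "coeff (monic_poly m \<alpha>) m = 1"
  by (simp add: coeff_monic_poly)

lemma coeff_monic_trunc_product_eq_0:
  assumes "j > m + d"
  shows "coeff (monic_poly m \<alpha> * trunc_poly d \<beta>) j = 0"
proof -
  have "degree (trunc_poly d \<beta>) \<le> d" by (rule degree_le) (simp add: coeff_trunc_poly)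
  then have "degree (monic_poly m \<alpha> * trunc_poly d \<beta>) \<le> m + d"
    using degree_mult_le[of "monic_poly m \<alpha>" "trunc_poly d \<beta>"] by (simp add: degree_monic_poly)
  then show ?thesis using assms by (simp add: coeff_eq_0)
qed

lemma coeffs_dvd_monic_poly_diff:
  assumes "\<And>a. a < m \<Longrightarrow> q dvd \<alpha> a - \<alpha>' a"
  shows "coeffs_dvd q (monic_poly m \<alpha> - monic_poly m \<alpha>')"
  using assms by (simp add: coeffs_dvd_def coeff_monic_poly)

lemma coeffs_dvd_trunc_poly_diff:
  assumes "\<And>b. b \<le> d \<Longrightarrow> q dvd \<beta> b - \<beta>' b"
  shows "coeffs_dvd q (trunc_poly d \<beta> - trunc_poly d \<beta>')"
  using assms by (simp add: coeffs_dvd_def coeff_trunc_poly)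

lemma coeff_monic_trunc_product_mod_cong:
  assumes "\<And>a. a < m \<Longrightarrow> \<alpha> a mod q = \<alpha>' a mod q"
    and "\<And>b. b \<le> d \<Longrightarrow> \<beta> b mod q = \<beta>' b mod q"
  shows "coeff (monic_poly m \<alpha> * trunc_poly d \<beta>) j mod q = coeff (monic_poly m \<alpha>' * trunc_poly d \<beta>') j mod q"
proof -
  have g: "coeffs_dvd q (monic_poly m \<alpha> - monic_poly m \<alpha>')"
    by (rule coeffs_dvd_monic_poly_diff) (use assms(1) in \<open>simp add: mod_eq_dvd_iff\<close>)
  have h: "coeffs_dvd q (trunc_poly d \<beta> - trunc_poly d \<beta>')"
    by (rule coeffs_dvd_trunc_poly_diff) (use assms(2) in \<open>simp add: mod_eq_dvd_iff\<close>)
  have e: "monic_poly m \<alpha> * trunc_poly d \<beta> - monic_poly m \<alpha>' * trunc_poly d \<beta>'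
      = monic_poly m \<alpha> * (trunc_poly d \<beta> - trunc_poly d \<beta>') + (monic_poly m \<alpha> - monic_poly m \<alpha>') * trunc_poly d \<beta>'"
    by (simp add: algebra_simps)
  have "coeffs_dvd q (monic_poly m \<alpha> * trunc_poly d \<beta> - monic_poly m \<alpha>' * trunc_poly d \<beta>')"
    unfolding e by (rule coeffs_dvd_add[OF coeffs_dvd_mult_left[OF h] coeffs_dvd_mult_right[OF g]])
  then show ?thesis by (simp add: coeffs_dvd_def mod_eq_dvd_iff)
qed

text \<open>At level k, \<open>factor_residues\<close> holds the residues mod p^k of the coefficients of
  (g, h) in Z_p[x]^1_m \<times> P_1^d and \<open>product_residues\<close> those of f in B_{m,m+d}.\<close>

definition residues_mod :: "nat \<Rightarrow> nat \<Rightarrow> int \<Rightarrow> int set" where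
  "residues_mod p k e = {x. 0 \<le> x \<and> x < int p ^ k \<and> x mod int p = e}"

definition factor_residues :: "nat \<Rightarrow> nat \<Rightarrow> nat \<Rightarrow> nat \<Rightarrow> ((nat \<Rightarrow> int) \<times> (nat \<Rightarrow> int)) set" where
  "factor_residues p m d k = PiE {..<m} (\<lambda>_. {0..<int p ^ k}) \<times> PiE {..d} (\<lambda>b. residues_mod p k (if b = 0 then 1 else 0))"

definition product_residues :: "nat \<Rightarrow> nat \<Rightarrow> nat \<Rightarrow> nat \<Rightarrow> (nat \<Rightarrow> int) set" where
  "product_residues p m d k = PiE {..m+d} (\<lambda>j. if j < m then {0..<int p ^ k} else residues_mod p k (if j = m then 1 else 0))"

definition mult_residues :: "nat \<Rightarrow> nat \<Rightarrow> nat \<Rightarrow> nat \<Rightarrow> (nat \<Rightarrow> int) \<times> (nat \<Rightarrow> int) \<Rightarrow> nat \<Rightarrow> int" where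
  "mult_residues p m d k x = (\<lambda>j\<in>{..m+d}. coeff (monic_poly m (fst x) * trunc_poly d (snd x)) j mod int p ^ k)"

lemma factor_residuesD:
  assumes "(\<alpha>, \<beta>) \<in> factor_residues p m d k"
  shows factor_residues_fst: "a < m \<Longrightarrow> 0 \<le> \<alpha> a \<and> \<alpha> a < int p ^ k"
    and factor_residues_snd: "b \<le> d \<Longrightarrow> \<beta> b \<in> residues_mod p k (if b = 0 then 1 else 0)"
proof -
  show "a < m \<Longrightarrow> 0 \<le> \<alpha> a \<and> \<alpha> a < int p ^ k" using assms by (auto simp: factor_residues_def)
  have "\<beta> \<in> (\<Pi>\<^sub>E b\<in>{..d}. residues_mod p k (if b = 0 then 1 else 0))"
    using assms by (simp add: factor_residues_def)
  then show "b \<le> d \<Longrightarrow> \<beta> b \<in> residues_mod p k (if b = 0 then 1 else 0)" by (rule PiE_mem) simp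
qed

lemma coeffs_dvd_trunc_poly_minus_1:
  assumes "\<beta> \<in> PiE {..d} (\<lambda>b. residues_mod p k (if b = 0 then 1 else 0))" "p > 1" "k \<ge> 1"
  shows "coeffs_dvd (int p) (trunc_poly d \<beta> - 1)"
  unfolding coeffs_dvd_def
proof
  fix i
  have "int p dvd \<beta> i - (if i = 0 then 1 else 0)" if "i \<le> d"
  proof -
    have "\<beta> i mod int p = (if i = 0 then 1 else 0)" using PiE_mem[OF assms(1), of i] that by (auto simp: residues_mod_def)
    then have "\<beta> i mod int p = (if i = 0 then 1 else 0) mod int p" using assms(2) by auto
    then show ?thesis by (simp add: mod_eq_dvd_iff)
  qed
  then show "int p dvd coeff (trunc_poly d \<beta> - 1) i"
    by (auto simp: coeff_trunc_poly coeff_1)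
qed

lemma mod_pow_mod: "k \<ge> 1 \<Longrightarrow> (x::int) mod (int p ^ k) mod int p = x mod int p"
  by (rule mod_mod_cancel) (simp add: dvd_power)

lemma mult_residues_in_product_residues:
  assumes p: "p > 1" and k: "k \<ge> 1" and x: "x \<in> factor_residues p m d k"
  shows "mult_residues p m d k x \<in> product_residues p m d k"
proof -
  obtain \<alpha> \<beta> where x': "x = (\<alpha>, \<beta>)" by (cases x)
  have h1: "coeffs_dvd (int p) (trunc_poly d \<beta> - 1)" using coeffs_dvd_trunc_poly_minus_1[of \<beta> d p k] x x' p k by (auto simp: factor_residues_def)
  have "coeffs_dvd (int p) (monic_poly m \<alpha> * trunc_poly d \<beta> - monic_poly m \<alpha>)"
    using coeffs_dvd_mult_left[OF h1, of "monic_poly m \<alpha>"] by (simp add: algebra_simps)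
  then have cm: "coeff (monic_poly m \<alpha> * trunc_poly d \<beta>) j mod int p = coeff (monic_poly m \<alpha>) j mod int p" for j
    by (simp add: coeffs_dvd_def mod_eq_dvd_iff)
  have pk: "int p ^ k > 0" using p by simp
  show ?thesis
    unfolding product_residues_def mult_residues_def x'
  proof (rule PiE_I)
    fix j assume j: "j \<in> {..m+d}"
    let ?v = "coeff (monic_poly m \<alpha> * trunc_poly d \<beta>) j mod int p ^ k"
    have r: "0 \<le> ?v" "?v < int p ^ k" using pk by auto
    have "?v mod int p = coeff (monic_poly m \<alpha>) j mod int p" using mod_pow_mod[OF k] cm by simp
    then have "j \<ge> m \<Longrightarrow> ?v mod int p = (if j = m then 1 else 0)"
      using p by (auto simp: coeff_monic_poly)
    then show "(\<lambda>j\<in>{..m + d}. coeff (monic_poly m (fst (\<alpha>, \<beta>)) * trunc_poly d (snd (\<alpha>, \<beta>))) j mod int p ^ k) j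
        \<in> (if j < m then {0..<int p ^ k} else residues_mod p k (if j = m then 1 else 0))"
      using j r by (auto simp: residues_mod_def)
  qed auto
qed

lemma PiE_eq_of_dvd_range:
  fixes f g :: "'i \<Rightarrow> int"
  assumes f: "f \<in> PiE I A" and g: "g \<in> PiE I A" and A: "\<And>i. i \<in> I \<Longrightarrow> A i \<subseteq> {0..<q}"
    and dv: "\<And>i. i \<in> I \<Longrightarrow> q dvd f i - g i"
  shows "f = g"
proof (rule PiE_ext[OF f g])
  fix i assume i: "i \<in> I"
  have "f i \<in> {0..<q}" "g i \<in> {0..<q}" using A[OF i] PiE_mem[OF f i] PiE_mem[OF g i] by auto
  moreover have "f i mod q = g i mod q" using dv[OF i] by (simp add: mod_eq_dvd_iff)
  ultimately show "f i = g i" by simp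
qed

lemma coeffs_dvd_of_mult_residues_eq:
  assumes "mult_residues p m d k (\<alpha>, \<beta>) = mult_residues p m d k (\<alpha>', \<beta>')"
  shows "coeffs_dvd (int p ^ k) (monic_poly m \<alpha> * trunc_poly d \<beta> - monic_poly m \<alpha>' * trunc_poly d \<beta>')"
  unfolding coeffs_dvd_def
proof
  fix j
  show "int p ^ k dvd coeff (monic_poly m \<alpha> * trunc_poly d \<beta> - monic_poly m \<alpha>' * trunc_poly d \<beta>') j"
  proof (cases "j \<le> m + d")
    case True
    then have "coeff (monic_poly m \<alpha> * trunc_poly d \<beta>) j mod int p ^ k
        = coeff (monic_poly m \<alpha>' * trunc_poly d \<beta>') j mod int p ^ k"
      using fun_cong[OF assms, of j] unfolding mult_residues_def by simp
    then show ?thesis by (simp add: mod_eq_dvd_iff)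
  qed (simp add: coeff_monic_trunc_product_eq_0)
qed

lemma inj_on_mult_residues:
  assumes p: "p > 1" and k: "k \<ge> 1"
  shows "inj_on (mult_residues p m d k) (factor_residues p m d k)"
proof (rule inj_onI, clarify)
  fix \<alpha> \<beta> \<alpha>' \<beta>' assume x: "(\<alpha>, \<beta>) \<in> factor_residues p m d k" and y: "(\<alpha>', \<beta>') \<in> factor_residues p m d k"
    and eq: "mult_residues p m d k (\<alpha>, \<beta>) = mult_residues p m d k (\<alpha>', \<beta>')"
  have h1: "coeffs_dvd (int p) (trunc_poly d \<beta> - 1)" and h2: "coeffs_dvd (int p) (trunc_poly d \<beta>' - 1)"
    using coeffs_dvd_trunc_poly_minus_1[OF _ p k] x y by (auto simp: factor_residues_def)
  have U: "coeffs_dvd (int p ^ k) (monic_poly m \<alpha> - monic_poly m \<alpha>')"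
    "coeffs_dvd (int p ^ k) (trunc_poly d \<beta> - trunc_poly d \<beta>')"
    using monic_factors_unique_mod_pow[OF degree_monic_poly coeff_monic_poly_degree degree_monic_poly
        coeff_monic_poly_degree h1 h2 _ k coeffs_dvd_of_mult_residues_eq[OF eq]] p
    by auto
  have "\<alpha> = \<alpha>'"
  proof (rule PiE_eq_of_dvd_range[where A="\<lambda>_. {0..<int p ^ k}"])
    show "int p ^ k dvd \<alpha> a - \<alpha>' a" if "a \<in> {..<m}" for a
      using U(1) that unfolding coeffs_dvd_def by (metis coeff_monic_poly coeff_diff lessThan_iff)
  qed (use x y in \<open>auto simp: factor_residues_def\<close>)
  moreover have "\<beta> = \<beta>'"
  proof (rule PiE_eq_of_dvd_range[where A="\<lambda>b. residues_mod p k (if b = 0 then 1 else 0)"])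
    show "int p ^ k dvd \<beta> b - \<beta>' b" if "b \<in> {..d}" for b
      using U(2) that unfolding coeffs_dvd_def by (metis coeff_trunc_poly coeff_diff atMost_iff)
  qed (use x y in \<open>auto simp: factor_residues_def residues_mod_def\<close>)
  ultimately show "\<alpha> = \<alpha>' \<and> \<beta> = \<beta>'" by simp
qed

lemma card_residues_mod:
  assumes p: "p > 1" and k: "k \<ge> 1" and e: "0 \<le> e" "e < int p"
  shows "card (residues_mod p k e) = p ^ (k - 1)"
proof -
  define q where "q = int p ^ (k - 1)"
  have pk: "int p ^ k = int p * q" unfolding q_def using k
    by (metis Suc_diff_le diff_Suc_1 power_Suc)
  have q0: "q > 0" unfolding q_def using p by simp
  have eq: "residues_mod p k e = (\<lambda>y. e + int p * y) ` {0..<q}"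
  proof
    show "residues_mod p k e \<subseteq> (\<lambda>y. e + int p * y) ` {0..<q}"
    proof
      fix x assume x: "x \<in> residues_mod p k e"
      then have x1: "0 \<le> x" "x < int p * q" "x mod int p = e" using pk by (auto simp: residues_mod_def)
      have "x = e + int p * (x div int p)" using x1(3) by (metis mult_div_mod_eq add.commute)
      moreover have "x div int p \<in> {0..<q}"
      proof -
        have "x mod int p \<ge> 0" using p by simp
        then have "x div int p * int p \<le> x" using div_mult_mod_eq[of x "int p"] by linarith
        then have "x div int p * int p < q * int p" using x1(2) by (simp add: mult.commute)
        then have "x div int p < q" using p by (simp add: mult_less_cancel_right)
        moreover have "0 \<le> x div int p" using x1(1) p by (simp add: pos_imp_zdiv_nonneg_iff)
        ultimately show ?thesis by simp
      qed
      ultimately show "x \<in> (\<lambda>y. e + int p * y) ` {0..<q}" by blast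
    qed
    show "(\<lambda>y. e + int p * y) ` {0..<q} \<subseteq> residues_mod p k e"
    proof
      fix x assume "x \<in> (\<lambda>y. e + int p * y) ` {0..<q}"
      then obtain y where y: "0 \<le> y" "y < q" "x = e + int p * y" by auto
      have "int p * y \<le> int p * (q - 1)" using y p by (intro mult_left_mono) auto
      then have "x < int p * q" using y e by (simp add: algebra_simps)
      moreover have "x mod int p = e" using y e by simp
      moreover have "0 \<le> x" using y e p by simp
      ultimately show "x \<in> residues_mod p k e" using pk by (simp add: residues_mod_def)
    qed
  qed
  have "card (residues_mod p k e) = card {0..<q}"
    unfolding eq by (rule card_image) (use p in \<open>auto simp: inj_on_def\<close>)
  also have "\<dots> = nat q" by simp
  also have "\<dots> = p ^ (k - 1)" unfolding q_def by (simp add: nat_power_eq)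
  finally show ?thesis .
qed

lemma finite_residues_mod: "finite (residues_mod p k e)"
  by (rule finite_subset[of _ "{0..<int p ^ k}"]) (auto simp: residues_mod_def)

lemma card_factor_residues:
  assumes p: "p > 1" and k: "k \<ge> 1"
  shows "card (factor_residues p m d k) = p ^ (k * m) * p ^ ((k - 1) * (d + 1))"
proof -
  have "card (factor_residues p m d k) = (\<Prod>a<m. card {0..<int p ^ k}) * (\<Prod>b\<le>d. card (residues_mod p k (if b = 0 then 1 else 0)))"
    unfolding factor_residues_def by (simp add: card_cartesian_product card_PiE)
  also have "\<dots> = (\<Prod>a<m. p ^ k) * (\<Prod>b\<le>d. p ^ (k - 1))"
    using p k by (intro arg_cong2[where f="(*)"] prod.cong refl) (auto simp: card_residues_mod nat_power_eq)
  also have "\<dots> = p ^ (k * m) * p ^ ((k - 1) * (d + 1))"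
    by (simp add: power_mult[symmetric] power_add)
  finally show ?thesis .
qed

lemma card_product_residues:
  assumes p: "p > 1" and k: "k \<ge> 1"
  shows "card (product_residues p m d k) = p ^ (k * m) * p ^ ((k - 1) * (d + 1))"
proof -
  have "card (product_residues p m d k) = (\<Prod>j\<le>m+d. card (if j < m then {0..<int p ^ k} else residues_mod p k (if j = m then 1 else 0)))"
    unfolding product_residues_def by (simp add: card_PiE)
  also have "\<dots> = (\<Prod>j\<le>m+d. if j < m then p ^ k else p ^ (k - 1))"
    using p k by (intro prod.cong refl) (auto simp: card_residues_mod nat_power_eq)
  also have "\<dots> = (\<Prod>j\<in>{..<m}. p ^ k) * (\<Prod>j\<in>{m..m+d}. p ^ (k - 1))"
  proof -
    have u: "{..m+d} = {..<m} \<union> {m..m+d}" by auto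
    have "(\<Prod>j\<le>m+d. if j < m then p ^ k else p ^ (k - 1))
        = (\<Prod>j\<in>{..<m}. if j < m then p ^ k else p ^ (k - 1)) * (\<Prod>j\<in>{m..m+d}. if j < m then p ^ k else p ^ (k - 1))"
      unfolding u by (rule prod.union_disjoint) auto
    also have "\<dots> = (\<Prod>j\<in>{..<m}. p ^ k) * (\<Prod>j\<in>{m..m+d}. p ^ (k - 1))"
      by (intro arg_cong2[where f="(*)"] prod.cong refl) auto
    finally show ?thesis .
  qed
  also have "\<dots> = p ^ (k * m) * p ^ ((k - 1) * (d + 1))"
    by (simp add: power_mult[symmetric] power_add)
  finally show ?thesis .
qed

lemma finite_product_residues: "finite (product_residues p m d k)"
  unfolding product_residues_def by (rule finite_PiE) (auto simp: finite_residues_mod)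

lemma bij_betw_mult_residues:
  assumes p: "p > 1" and k: "k \<ge> 1"
  shows "bij_betw (mult_residues p m d k) (factor_residues p m d k) (product_residues p m d k)"
proof -
  have inj: "inj_on (mult_residues p m d k) (factor_residues p m d k)" by (rule inj_on_mult_residues[OF p k])
  have sub: "mult_residues p m d k ` factor_residues p m d k \<subseteq> product_residues p m d k" using mult_residues_in_product_residues[OF p k] by blast
  have "card (mult_residues p m d k ` factor_residues p m d k) = card (product_residues p m d k)"
    using card_image[OF inj] card_factor_residues[OF p k] card_product_residues[OF p k] by simp
  then have "mult_residues p m d k ` factor_residues p m d k = product_residues p m d k"
    using card_subset_eq[OF finite_product_residues sub] by simp
  then show ?thesis using inj by (simp add: bij_betw_def)
qed

lemma sum_mod_cong:
  fixes f g :: "'a \<Rightarrow> int"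
  assumes "\<And>a. a \<in> A \<Longrightarrow> f a mod q = g a mod q"
  shows "sum f A mod q = sum g A mod q"
proof -
  have "sum f A mod q = (\<Sum>a\<in>A. f a mod q) mod q" by (simp add: mod_sum_eq)
  also have "\<dots> = (\<Sum>a\<in>A. g a mod q) mod q" using assms by (simp cong: sum.cong)
  also have "\<dots> = sum g A mod q" by (simp add: mod_sum_eq)
  finally show ?thesis .
qed

section \<open>Bijectivity of the multiplication map\<close>

lemma space_poly_le: "space (poly_le p n) = Zp_tuples p {..n}"
  by (simp add: poly_le_def space_haar_PiM)

lemma space_monic: "space (monic_polys p m) = Zp_tuples p {..<m}"
  by (simp add: monic_polys_def space_haar_PiM)

lemma P1_subset: "P1 p d \<subseteq> Zp_tuples p {..d}"
  by (auto simp: P1_def space_poly_le)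

lemma Bmn_subset: "Bmn p m n \<subseteq> Zp_tuples p {..n}"
  by (auto simp: Bmn_def space_poly_le)

definition level_residues :: "nat \<Rightarrow> nat \<Rightarrow> nat \<Rightarrow> (nat \<Rightarrow> nat \<Rightarrow> int) \<times> (nat \<Rightarrow> nat \<Rightarrow> int) \<Rightarrow> (nat \<Rightarrow> int) \<times> (nat \<Rightarrow> int)" where
  "level_residues m d k x = (restrict (\<lambda>a. fst x a k) {..<m}, restrict (\<lambda>b. snd x b k) {..d})"

lemma monic_poly_restrict: "monic_poly m (restrict \<alpha> {..<m}) = monic_poly m \<alpha>"
  by (rule poly_eqI) (simp add: coeff_monic_poly)

lemma trunc_poly_restrict: "trunc_poly d (restrict \<beta> {..d}) = trunc_poly d \<beta>"
  by (rule poly_eqI) (simp add: coeff_trunc_poly)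

lemma poly_mu_coeff:
  assumes j: "j \<le> m + d"
  shows "poly_mu p m (m + d) (g, h) j k = coeff (monic_poly m (\<lambda>a. g a k) * trunc_poly d (\<lambda>b. h b k)) j mod int p ^ k"
proof -
  have "poly_mu p m (m + d) (g, h) j k =
      (\<Sum>a\<le>j. monic_coeff p m g a k * le_coeff p d h (j - a) k) mod int p ^ k"
    using j by (simp add: poly_mu_def)
  also have "\<dots> = (\<Sum>a\<le>j. coeff (monic_poly m (\<lambda>a. g a k)) a * coeff (trunc_poly d (\<lambda>b. h b k)) (j - a)) mod int p ^ k"
  proof (rule sum_mod_cong)
    fix a
    have monic: "monic_coeff p m g a k mod int p ^ k = coeff (monic_poly m (\<lambda>a. g a k)) a mod int p ^ k"
      by (simp add: monic_coeff_def coeff_monic_poly zp_of_int_def)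
    have trunc: "le_coeff p d h (j - a) k mod int p ^ k = coeff (trunc_poly d (\<lambda>b. h b k)) (j - a) mod int p ^ k"
      by (simp add: le_coeff_def coeff_trunc_poly zp_of_int_def)
    show "monic_coeff p m g a k * le_coeff p d h (j - a) k mod int p ^ k =
        coeff (monic_poly m (\<lambda>a. g a k)) a * coeff (trunc_poly d (\<lambda>b. h b k)) (j - a) mod int p ^ k"
      using monic trunc by (metis mod_mult_eq)
  qed
  also have "\<dots> = coeff (monic_poly m (\<lambda>a. g a k) * trunc_poly d (\<lambda>b. h b k)) j mod int p ^ k"
    by (simp add: coeff_mult)
  finally show ?thesis .
qed

lemma poly_mu_level:
  assumes j: "j \<le> m + d"
  shows "poly_mu p m (m + d) x j k = mult_residues p m d k (level_residues m d k x) j"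
proof -
  obtain g h where x: "x = (g, h)" by (cases x)
  have "mult_residues p m d k (level_residues m d k x) j = coeff (monic_poly m (restrict (\<lambda>a. g a k) {..<m}) * trunc_poly d (restrict (\<lambda>b. h b k) {..d})) j mod int p ^ k"
    unfolding mult_residues_def level_residues_def x fst_conv snd_conv using j by (subst restrict_apply') auto
  also have "\<dots> = coeff (monic_poly m (\<lambda>a. g a k) * trunc_poly d (\<lambda>b. h b k)) j mod int p ^ k"
    by (simp only: monic_poly_restrict trunc_poly_restrict)
  finally show ?thesis unfolding x poly_mu_coeff[OF j] by simp
qed

lemma poly_mu_in_Zp_tuples:
  assumes g: "g \<in> Zp_tuples p {..<m}" and h: "h \<in> Zp_tuples p {..d}" and p: "p > 1"
  shows "poly_mu p m (m + d) (g, h) \<in> Zp_tuples p {..m + d}"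
  unfolding Zp_tuples_def
proof (rule PiE_I)
  fix j assume j: "j \<in> {..m + d}"
  have ga: "g a \<in> Zp p" if "a < m" for a using g that by (auto simp: Zp_tuples_def)
  have hb: "h b \<in> Zp p" if "b \<le> d" for b using h that by (auto simp: Zp_tuples_def)
  show "poly_mu p m (m + d) (g, h) j \<in> Zp p"
    unfolding Zp_def mem_Collect_eq
  proof (intro allI conjI)
    fix k
    have pk: "int p ^ k > 0" using p by simp
    show "0 \<le> poly_mu p m (m + d) (g, h) j k" "poly_mu p m (m + d) (g, h) j k < int p ^ k"
      using j pk by (auto simp: poly_mu_coeff)
    have c: "coeff (monic_poly m (\<lambda>a. g a k) * trunc_poly d (\<lambda>b. h b k)) j mod int p ^ k =
          coeff (monic_poly m (\<lambda>a. g a (Suc k)) * trunc_poly d (\<lambda>b. h b (Suc k))) j mod int p ^ k"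
    proof (rule coeff_monic_trunc_product_mod_cong)
      fix a assume "a < m"
      then show "g a k mod int p ^ k = g a (Suc k) mod int p ^ k"
        using Zp_memD(3)[OF ga[of a], of k] by simp
    next
      fix b assume "b \<le> d"
      then show "h b k mod int p ^ k = h b (Suc k) mod int p ^ k"
        using Zp_memD(3)[OF hb[of b], of k] by simp
    qed
    have dv: "int p ^ k dvd int p * int p ^ k" by simp
    show "poly_mu p m (m + d) (g, h) j k = poly_mu p m (m + d) (g, h) j (Suc k) mod int p ^ k"
      using j unfolding poly_mu_coeff[OF j[simplified]] c by (simp add: mod_mod_cancel[OF dv])
  qed
next
  show "\<And>j. j \<notin> {..m + d} \<Longrightarrow> poly_mu p m (m + d) (g, h) j = undefined"
    by (simp add: poly_mu_def)
qed

lemma level_residues_in_factor_residues: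
  assumes p: "p > 1" and k: "k \<ge> 1" and g: "g \<in> Zp_tuples p {..<m}" and h: "h \<in> P1 p d"
  shows "level_residues m d k (g, h) \<in> factor_residues p m d k"
proof -
  have ga: "g a \<in> Zp p" if "a < m" for a using g that by (auto simp: Zp_tuples_def)
  have hb: "h b \<in> Zp p" "zp_red (h b) = (if b = 0 then 1 else 0)" if "b \<le> d" for b
    using h that P1_subset[of p d] by (auto simp: Zp_tuples_def P1_def)
  have "restrict (\<lambda>a. g a k) {..<m} \<in> PiE {..<m} (\<lambda>_. {0..<int p ^ k})"
    using Zp_memD(1,2)[OF ga] by auto
  moreover have "restrict (\<lambda>b. h b k) {..d} \<in> PiE {..d} (\<lambda>b. residues_mod p k (if b = 0 then 1 else 0))"
  proof (rule PiE_I)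
    fix b assume b: "b \<in> {..d}"
    have "h b 1 = h b k mod int p ^ 1" using Zp_compat[OF hb(1) k] b by simp
    then have "h b k mod int p = (if b = 0 then 1 else 0)" using hb(2)[of b] b by (simp add: zp_red_def)
    then show "restrict (\<lambda>b. h b k) {..d} b \<in> residues_mod p k (if b = 0 then 1 else 0)"
      using b hb(1)[of b] Zp_memD(1,2)[of "h b" p k] by (simp add: residues_mod_def)
  qed simp
  ultimately show ?thesis by (simp add: level_residues_def factor_residues_def)
qed

lemma Bmn_level_in_product_residues:
  assumes p: "p > 1" and k: "k \<ge> 1" and f: "f \<in> Bmn p m (m + d)"
  shows "restrict (\<lambda>j. f j k) {..m + d} \<in> product_residues p m d k"
  unfolding product_residues_def
proof (rule PiE_I)
  fix j assume j: "j \<in> {..m + d}"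
  have fj: "f j \<in> Zp p" using f j Bmn_subset[of p m "m + d"] by (auto simp: Zp_tuples_def)
  have red: "f j k mod int p = f j 1" using Zp_compat[OF fj k] by simp
  have r: "0 \<le> f j k" "f j k < int p ^ k" using Zp_memD(1,2)[OF fj] by auto
  show "restrict (\<lambda>j. f j k) {..m + d} j
      \<in> (if j < m then {0..<int p ^ k} else residues_mod p k (if j = m then 1 else 0))"
  proof (cases "j < m")
    case True
    then show ?thesis using j r by simp
  next
    case False
    have "f j 1 = (if j = m then 1 else 0)" using f j False by (auto simp: Bmn_def zp_red_def)
    then show ?thesis using j r red False by (simp add: residues_mod_def)
  qed
qed simp

lemma Bmn_if_level_1_in_product_residues:
  assumes p: "p > 1" and f: "f \<in> Zp_tuples p {..m + d}" and t: "restrict (\<lambda>j. f j 1) {..m + d} \<in> product_residues p m d 1"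
  shows "f \<in> Bmn p m (m + d)"
proof -
  have v: "f j 1 = (if j = m then 1 else 0)" if "m \<le> j" "j \<le> m + d" for j
  proof -
    have "f j 1 \<in> residues_mod p 1 (if j = m then 1 else 0)" using PiE_mem[OF t[unfolded product_residues_def], of j] that by simp
    then show ?thesis by (auto simp: residues_mod_def)
  qed
  show ?thesis using f v by (auto simp: Bmn_def space_poly_le zp_red_def)
qed

lemma poly_mu_level_residues:
  "restrict (\<lambda>j. poly_mu p m (m + d) x j k) {..m + d} = mult_residues p m d k (level_residues m d k x)"
  by (rule ext) (auto simp: poly_mu_level mult_residues_def)

lemma poly_mu_in_Bmn:
  assumes p: "p > 1" and g: "g \<in> Zp_tuples p {..<m}" and h: "h \<in> P1 p d"
  shows "poly_mu p m (m + d) (g, h) \<in> Bmn p m (m + d)"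
proof -
  have "restrict (\<lambda>j. poly_mu p m (m + d) (g, h) j 1) {..m + d}
      = mult_residues p m d 1 (level_residues m d 1 (g, h))"
    by (rule poly_mu_level_residues)
  also have "\<dots> \<in> product_residues p m d 1"
    using mult_residues_in_product_residues level_residues_in_factor_residues p g h by blast
  finally show ?thesis
    using Bmn_if_level_1_in_product_residues[OF p poly_mu_in_Zp_tuples[OF g _ p]] h P1_subset by blast
qed

lemma inj_on_poly_mu:
  assumes p: "p > 1"
  shows "inj_on (poly_mu p m (m + d)) (Zp_tuples p {..<m} \<times> P1 p d)"
proof (rule inj_onI, clarify)
  fix g h g' h'
  assume g: "g \<in> Zp_tuples p {..<m}" "g' \<in> Zp_tuples p {..<m}" and h: "h \<in> P1 p d" "h' \<in> P1 p d"
    and eq: "poly_mu p m (m + d) (g, h) = poly_mu p m (m + d) (g', h')"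
  have levels: "level_residues m d k (g, h) = level_residues m d k (g', h')" if k: "k \<ge> 1" for k
  proof (rule inj_onD[OF inj_on_mult_residues[OF p k]])
    show "mult_residues p m d k (level_residues m d k (g, h)) = mult_residues p m d k (level_residues m d k (g', h'))"
      using poly_mu_level_residues[of p m d _ k] eq by metis
  qed (use level_residues_in_factor_residues p k g h in blast)+
  have "g = g'"
  proof (rule Zp_tuples_eqI[OF g])
    fix a k :: nat assume "a \<in> {..<m}" "k \<ge> 1"
    then show "g a k = g' a k"
      using fun_cong[OF arg_cong[where f=fst, OF levels[OF \<open>k \<ge> 1\<close>]], of a] by (simp add: level_residues_def)
  qed
  moreover have "h = h'"
  proof (rule Zp_tuples_eqI)
    show "h \<in> Zp_tuples p {..d}" "h' \<in> Zp_tuples p {..d}" using h P1_subset by blast+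
    fix b k :: nat assume "b \<in> {..d}" "k \<ge> 1"
    then show "h b k = h' b k"
      using fun_cong[OF arg_cong[where f=snd, OF levels[OF \<open>k \<ge> 1\<close>]], of b] by (simp add: level_residues_def)
  qed
  ultimately show "g = g' \<and> h = h'" by simp
qed

lemma mult_residues_reduce:
  assumes p: "p > 1" and k: "k \<ge> 1"
    and x: "(\<alpha>, \<beta>) \<in> factor_residues p m d (Suc k)" and y: "y \<in> factor_residues p m d k"
    and eq: "\<And>j. j \<le> m + d \<Longrightarrow> mult_residues p m d k y j = mult_residues p m d (Suc k) (\<alpha>, \<beta>) j mod int p ^ k"
  shows "y = (restrict (\<lambda>a. \<alpha> a mod int p ^ k) {..<m}, restrict (\<lambda>b. \<beta> b mod int p ^ k) {..d})"
    (is "y = ?red")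
proof (rule sym, rule inj_onD[OF inj_on_mult_residues[OF p k] _ _ y])
  have pk: "int p ^ k > 0" using p by simp
  show "?red \<in> factor_residues p m d k"
    unfolding factor_residues_def
  proof (intro SigmaI PiE_I)
    fix b assume b: "b \<in> {..d}"
    have "\<beta> b \<in> residues_mod p (Suc k) (if b = 0 then 1 else 0)" using factor_residues_snd[OF x] b by simp
    then show "restrict (\<lambda>b. \<beta> b mod int p ^ k) {..d} b \<in> residues_mod p k (if b = 0 then 1 else 0)"
      using b pk mod_pow_mod[OF k, of "\<beta> b" p] by (simp add: residues_mod_def)
  qed (use pk in auto)
  have dvk: "int p ^ k dvd int p * int p ^ k" by simp
  show "mult_residues p m d k ?red = mult_residues p m d k y"
  proof
    fix j
    show "mult_residues p m d k ?red j = mult_residues p m d k y j"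
    proof (cases "j \<le> m + d")
      case True
      have "mult_residues p m d k ?red j = coeff (monic_poly m \<alpha> * trunc_poly d \<beta>) j mod int p ^ k"
        using True by (simp add: mult_residues_def) (rule coeff_monic_trunc_product_mod_cong, auto)
      then show ?thesis
        using eq[OF True] True by (simp add: mult_residues_def mod_mod_cancel[OF dvk])
    qed (simp add: mult_residues_def)
  qed
qed

lemma poly_mu_surj:
  assumes p: "p > 1" and f: "f \<in> Bmn p m (m + d)"
  shows "f \<in> poly_mu p m (m + d) ` (Zp_tuples p {..<m} \<times> P1 p d)"
proof -
  have fz: "f \<in> Zp_tuples p {..m + d}" using f Bmn_subset by auto
  define pre where "pre k = inv_into (factor_residues p m d k) (mult_residues p m d k)
      (restrict (\<lambda>j. f j k) {..m + d})" for k
  have pre: "pre k \<in> factor_residues p m d k"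
    "mult_residues p m d k (pre k) = restrict (\<lambda>j. f j k) {..m + d}" if k: "k \<ge> 1" for k
    using Bmn_level_in_product_residues[OF p k f] bij_betw_mult_residues[OF p k] unfolding pre_def
    by (auto simp: bij_betw_def inv_into_into f_inv_into_f)
  have compat: "pre k = (restrict (\<lambda>a. fst (pre (Suc k)) a mod int p ^ k) {..<m},
      restrict (\<lambda>b. snd (pre (Suc k)) b mod int p ^ k) {..d})" if k: "k \<ge> 1" for k
  proof (rule mult_residues_reduce[OF p k _ pre(1)[OF k]])
    show "(fst (pre (Suc k)), snd (pre (Suc k))) \<in> factor_residues p m d (Suc k)" using pre(1) by simp
    fix j assume j: "j \<le> m + d"
    have "f j \<in> Zp p" using fz j by (auto simp: Zp_tuples_def)
    then show "mult_residues p m d k (pre k) j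
        = mult_residues p m d (Suc k) (fst (pre (Suc k)), snd (pre (Suc k))) j mod int p ^ k"
      using pre(2)[OF k] pre(2)[of "Suc k"] j Zp_memD(3) by simp
  qed
  have compat_g: "fst (pre k) a = fst (pre (Suc k)) a mod int p ^ k" if "k \<ge> 1" "a < m" for k a
    by (subst compat[OF that(1)]) (simp add: that)
  have compat_h: "snd (pre k) b = snd (pre (Suc k)) b mod int p ^ k" if "k \<ge> 1" "b \<le> d" for k b
    by (subst compat[OF that(1)]) (simp add: that)
  have rng_g: "0 \<le> fst (pre k) a \<and> fst (pre k) a < int p ^ k" if "k \<ge> 1" "a < m" for k a
    using factor_residues_fst[of "fst (pre k)" "snd (pre k)"] pre(1)[OF that(1)] that by simp
  have rng_h: "snd (pre k) b \<in> residues_mod p k (if b = 0 then 1 else 0)" if "k \<ge> 1" "b \<le> d" for k b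
    using factor_residues_snd[of "fst (pre k)" "snd (pre k)"] pre(1)[OF that(1)] that by simp
  define g where "g = restrict (\<lambda>a k. if k = 0 then 0 else fst (pre k) a) {..<m}"
  define h where "h = restrict (\<lambda>b k. if k = 0 then 0 else snd (pre k) b) {..d}"
  have g: "g \<in> Zp_tuples p {..<m}"
    unfolding Zp_tuples_def g_def
    by (rule PiE_I) (auto intro!: Zp_of_compatible rng_g compat_g simp del: One_nat_def)
  have hz: "h \<in> Zp_tuples p {..d}"
    unfolding Zp_tuples_def h_def
  proof (rule PiE_I)
    fix b assume "b \<in> {..d}"
    then show "restrict (\<lambda>b k. if k = 0 then 0 else snd (pre k) b) {..d} b \<in> Zp p"
      using rng_h by (auto intro!: Zp_of_compatible compat_h simp: residues_mod_def simp del: One_nat_def)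
  qed auto
  have "zp_red (h b) = (if b = 0 then 1 else 0)" if "b \<le> d" for b
    using rng_h[of 1 b] that by (auto simp: zp_red_def h_def residues_mod_def)
  then have h: "h \<in> P1 p d" using hz by (simp add: P1_def space_poly_le)
  have levels: "level_residues m d k (g, h) = pre k" if k: "k \<ge> 1" for k
    using pre(1)[OF k] k
    by (cases "pre k") (auto simp: level_residues_def g_def h_def factor_residues_def PiE_def extensional_def)
  have "poly_mu p m (m + d) (g, h) = f"
  proof (rule Zp_tuples_eqI[OF poly_mu_in_Zp_tuples[OF g hz p] fz])
    fix j k :: nat assume "j \<in> {..m + d}" "k \<ge> 1"
    then show "poly_mu p m (m + d) (g, h) j k = f j k"
      using poly_mu_level[of j m d p] levels pre(2) by simp
  qed
  then show ?thesis using g h by force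
qed

lemma bij_betw_poly_mu:
  assumes p: "p > 1"
  shows "bij_betw (poly_mu p m (m + d)) (Zp_tuples p {..<m} \<times> P1 p d) (Bmn p m (m + d))"
  unfolding bij_betw_def using inj_on_poly_mu poly_mu_in_Bmn poly_mu_surj p by fast

section \<open>Measure preservation\<close>

lemma poly_mu_measurable:
  assumes p: "p > 1"
    and F1: "\<And>a k. a < m \<Longrightarrow> (\<lambda>x. fst x a k) \<in> measurable M (count_space UNIV)"
    and F2: "\<And>b k. b \<le> d \<Longrightarrow> (\<lambda>x. snd x b k) \<in> measurable M (count_space UNIV)"
    and sp: "poly_mu p m (m + d) \<in> space M \<rightarrow> Zp_tuples p {..m + d}"
  shows "poly_mu p m (m + d) \<in> measurable M (poly_le p (m + d))"
  unfolding poly_le_def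
proof (rule measurable_PiM_single')
  show "poly_mu p m (m + d) \<in> space M \<rightarrow> (\<Pi>\<^sub>E i\<in>{..m + d}. space (haar_Zp p))"
    using sp by (simp add: space_haar_Zp Zp_tuples_def)
  fix j assume j: "j \<in> {..m + d}"
  have comp: "(\<lambda>x. poly_mu p m (m + d) x j k) \<in> measurable M (count_space UNIV)" for k
  proof -
    have mc: "(\<lambda>x. monic_coeff p m (fst x) a k) \<in> measurable M (count_space UNIV)" for a
      by (cases "a < m") (auto simp: monic_coeff_def intro: F1)
    have lc: "(\<lambda>x. le_coeff p d (snd x) b k) \<in> measurable M (count_space UNIV)" for b
      by (cases "b \<le> d") (auto simp: le_coeff_def intro: F2)
    have "(\<lambda>x. (\<Sum>a\<le>j. monic_coeff p m (fst x) a k * le_coeff p d (snd x) (j - a) k) mod int p ^ k)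
        \<in> measurable M (count_space UNIV)"
      by (rule measurable_countable_map, rule measurable_countable_sum) (auto intro: measurable_countable_map2[OF mc lc])
    moreover have "poly_mu p m (m + d) x j k =
        (\<Sum>a\<le>j. monic_coeff p m (fst x) a k * le_coeff p d (snd x) (j - a) k) mod int p ^ k" for x
      using j by (cases x) (simp add: poly_mu_def)
    ultimately show ?thesis by simp
  qed
  have "(\<lambda>x. poly_mu p m (m + d) x j) \<in> measurable M (restrict_space int_seq_space (Zp p))"
  proof (rule measurable_restrict_space2)
    show "(\<lambda>x. poly_mu p m (m + d) x j) \<in> space M \<rightarrow> Zp p"
      using sp j by (auto simp: Zp_tuples_def)
    show "(\<lambda>x. poly_mu p m (m + d) x j) \<in> measurable M int_seq_space"
      unfolding int_seq_space_def
      by (rule measurable_PiM_single') (use comp in \<open>auto simp: PiE_def extensional_def\<close>)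
  qed
  then show "(\<lambda>x. poly_mu p m (m + d) x j) \<in> measurable M (haar_Zp p)"
    by (simp add: measurable_cong_sets[OF refl sets_haar_Zp])
qed

lemma residue_measurable_haar_PiM:
  assumes "i \<in> I"
  shows "(\<lambda>f. f i k) \<in> measurable (haar_PiM p I) (count_space UNIV)"
  using measurable_comp[OF measurable_component_singleton[OF assms] residue_measurable[of k p]]
  by (simp add: comp_def)

lemma poly_mu_in_residue_cyl_iff:
  assumes p: "p > 1" and k: "k \<ge> 1" and g: "g \<in> Zp_tuples p {..<m}" and h: "h \<in> P1 p d"
    and ab: "(\<alpha>, \<beta>) \<in> factor_residues p m d k" and mab: "mult_residues p m d k (\<alpha>, \<beta>) = restrict c {..m + d}"
  shows "poly_mu p m (m + d) (g, h) \<in> residue_cyl p {..m + d} k c \<longleftrightarrow>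
      g \<in> residue_cyl p {..<m} k \<alpha> \<and> h \<in> residue_cyl p {..d} k \<beta>"
proof -
  have hOm: "h \<in> Zp_tuples p {..d}" using h P1_subset by auto
  have muOm: "poly_mu p m (m + d) (g, h) \<in> Zp_tuples p {..m + d}" by (rule poly_mu_in_Zp_tuples[OF g hOm p])
  have "poly_mu p m (m + d) (g, h) \<in> residue_cyl p {..m + d} k c \<longleftrightarrow>
      restrict (\<lambda>j. poly_mu p m (m + d) (g, h) j k) {..m + d} = restrict c {..m + d}"
    using muOm by (auto simp: residue_cyl_def restrict_def fun_eq_iff)
  also have "\<dots> \<longleftrightarrow> mult_residues p m d k (level_residues m d k (g, h)) = mult_residues p m d k (\<alpha>, \<beta>)"
    by (simp add: poly_mu_level_residues mab)
  also have "\<dots> \<longleftrightarrow> level_residues m d k (g, h) = (\<alpha>, \<beta>)"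
    using inj_onD[OF inj_on_mult_residues[OF p k] _ level_residues_in_factor_residues[OF p k g h] ab] by auto
  also have "\<dots> \<longleftrightarrow> g \<in> residue_cyl p {..<m} k \<alpha> \<and> h \<in> residue_cyl p {..d} k \<beta>"
  proof -
    have ea: "\<alpha> \<in> extensional {..<m}" and eb: "\<beta> \<in> extensional {..d}"
      using ab by (auto simp: factor_residues_def PiE_def)
    have "restrict (\<lambda>a. g a k) {..<m} = \<alpha> \<longleftrightarrow> (\<forall>a<m. g a k = \<alpha> a)"
      using ea by (auto simp: fun_eq_iff restrict_def extensional_def)
    moreover have "restrict (\<lambda>b. h b k) {..d} = \<beta> \<longleftrightarrow> (\<forall>b\<le>d. h b k = \<beta> b)"
      using eb by (auto simp: fun_eq_iff restrict_def extensional_def)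
    ultimately show ?thesis using g hOm by (auto simp: level_residues_def residue_cyl_def)
  qed
  finally show ?thesis .
qed

lemma residue_cyl_subset_P1:
  assumes p: "p > 1" and k: "k \<ge> 1" and ab: "(\<alpha>, \<beta>) \<in> factor_residues p m d k"
  shows "residue_cyl p {..d} k \<beta> \<subseteq> P1 p d"
proof
  fix h assume h: "h \<in> residue_cyl p {..d} k \<beta>"
  have "zp_red (h b) = (if b = 0 then 1 else 0)" if b: "b \<le> d" for b
  proof -
    have hb: "h b \<in> Zp p" using h b by (auto simp: residue_cyl_def Zp_tuples_def)
    have "\<beta> b \<in> residues_mod p k (if b = 0 then 1 else 0)" using factor_residues_snd[OF ab b] .
    moreover have "h b 1 = \<beta> b mod int p" using Zp_compat[OF hb k] h b by (simp add: residue_cyl_def)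
    ultimately show ?thesis using p by (auto simp: residues_mod_def zp_red_def)
  qed
  then show "h \<in> P1 p d" using h by (auto simp: P1_def space_poly_le residue_cyl_def)
qed

lemma residue_cyl_nonempty:
  assumes p: "p > 1" and c: "\<And>j. j \<in> I \<Longrightarrow> 0 \<le> c j \<and> c j < int p ^ k"
  shows "residue_cyl p I k c \<noteq> {}"
proof -
  have "restrict (\<lambda>j i. c j mod int p ^ i) I \<in> residue_cyl p I k c"
    using Zp_residues_of[of p "c _" k] c p by (auto simp: residue_cyl_def Zp_tuples_def)
  then show ?thesis by blast
qed

lemma emeasure_residue_cyl_product_residues:
  assumes p: "p > 1" and c: "restrict c {..m + d} \<in> product_residues p m d k"
  shows "emeasure (poly_le p (m + d)) (residue_cyl p {..m + d} k c) = ennreal (1 / real p) ^ (k * card {..m + d})"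
  unfolding poly_le_def
proof (rule emeasure_residue_cyl)
  fix j assume j: "j \<in> {..m + d}"
  have "restrict c {..m + d} j \<in> (if j < m then {0..<int p ^ k} else residues_mod p k (if j = m then 1 else 0))"
    using PiE_mem[OF c[unfolded product_residues_def] j] .
  then show "0 \<le> c j \<and> c j < int p ^ k" using j by (cases "j < m") (auto simp: residues_mod_def)
qed (use p in auto)

lemma poly_mu_vimage_residue_cyl:
  assumes p: "p > 1" and k: "k \<ge> 1"
    and ab: "(\<alpha>, \<beta>) \<in> factor_residues p m d k" and mab: "mult_residues p m d k (\<alpha>, \<beta>) = restrict c {..m + d}"
  shows "poly_mu p m (m + d) -` residue_cyl p {..m + d} k c \<inter> (Zp_tuples p {..<m} \<times> P1 p d)
      = residue_cyl p {..<m} k \<alpha> \<times> residue_cyl p {..d} k \<beta>"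
proof (intro set_eqI iffI)
  fix x assume "x \<in> poly_mu p m (m + d) -` residue_cyl p {..m + d} k c \<inter> (Zp_tuples p {..<m} \<times> P1 p d)"
  then show "x \<in> residue_cyl p {..<m} k \<alpha> \<times> residue_cyl p {..d} k \<beta>"
    using poly_mu_in_residue_cyl_iff[OF p k _ _ ab mab] by auto
next
  fix x assume "x \<in> residue_cyl p {..<m} k \<alpha> \<times> residue_cyl p {..d} k \<beta>"
  then obtain g h where x: "x = (g, h)" "g \<in> residue_cyl p {..<m} k \<alpha>" "h \<in> residue_cyl p {..d} k \<beta>"
    by auto
  have "g \<in> Zp_tuples p {..<m}" using x(2) by (simp add: residue_cyl_def)
  moreover have "h \<in> P1 p d" using x(3) residue_cyl_subset_P1[OF p k ab] by blast
  ultimately show "x \<in> poly_mu p m (m + d) -` residue_cyl p {..m + d} k c \<inter> (Zp_tuples p {..<m} \<times> P1 p d)"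
    using x poly_mu_in_residue_cyl_iff[OF p k _ _ ab mab] by auto
qed

lemma residue_cyl_outside_product_residues:
  assumes p: "p > 1" and k: "k \<ge> 1" and c: "restrict c {..m + d} \<notin> product_residues p m d k"
  shows "poly_mu p m (m + d) -` residue_cyl p {..m + d} k c \<inter> (Zp_tuples p {..<m} \<times> P1 p d) = {}"
    and "Bmn p m (m + d) \<inter> residue_cyl p {..m + d} k c = {}"
proof -
  have level_k: "restrict (\<lambda>j. f j k) {..m + d} = restrict c {..m + d}" if "f \<in> residue_cyl p {..m + d} k c" for f
    using that by (auto simp: residue_cyl_def restrict_def fun_eq_iff)
  show "poly_mu p m (m + d) -` residue_cyl p {..m + d} k c \<inter> (Zp_tuples p {..<m} \<times> P1 p d) = {}"
  proof safe
    fix g h assume "g \<in> Zp_tuples p {..<m}" "h \<in> P1 p d" "poly_mu p m (m + d) (g, h) \<in> residue_cyl p {..m + d} k c"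
    then show "(g, h) \<in> {}"
      using c level_k poly_mu_level_residues[of p m d "(g, h)" k]
        mult_residues_in_product_residues[OF p k level_residues_in_factor_residues[OF p k]] by metis
  qed
  show "Bmn p m (m + d) \<inter> residue_cyl p {..m + d} k c = {}"
  proof safe
    fix f assume "f \<in> Bmn p m (m + d)" "f \<in> residue_cyl p {..m + d} k c"
    then show "f \<in> {}" using c level_k Bmn_level_in_product_residues[OF p k] by metis
  qed
qed

lemma haar_PiM_eqI_residue_cyls:
  assumes I: "finite I"
    and sets1: "sets M1 = sets (haar_PiM p I)" and sets2: "sets M2 = sets (haar_PiM p I)"
    and fin: "\<And>A. emeasure M1 A \<noteq> \<infinity>"
    and eq: "\<And>k c. K \<le> k \<Longrightarrow> emeasure M1 (residue_cyl p I k c) = emeasure M2 (residue_cyl p I k c)"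
  shows "M1 = M2"
proof (rule measure_eqI_generator_eq_countable[OF Int_stable_residue_cyls residue_cyls_subset])
  show "sets M1 = sigma_sets (Zp_tuples p I) (residue_cyls p I K)"
    "sets M2 = sigma_sets (Zp_tuples p I) (residue_cyls p I K)"
    using sets1 sets2 sets_haar_PiM_residue_cyls[OF I] by simp_all
  show "residue_cyl p I K ` PiE I (\<lambda>_. {0..<int p ^ K}) \<subseteq> residue_cyls p I K"
    by (auto simp: residue_cyls_def)
  show "\<Union>(residue_cyl p I K ` PiE I (\<lambda>_. {0..<int p ^ K})) = Zp_tuples p I"
    by (rule Union_residue_cyl)
  show "countable (residue_cyl p I K ` PiE I (\<lambda>_. {0..<int p ^ K}))"
    using I by (auto intro: countable_finite finite_PiE)
  show "emeasure M1 A \<noteq> \<infinity>" for A by (rule fin)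
next
  fix X assume "X \<in> residue_cyls p I K"
  then show "emeasure M1 X = emeasure M2 X" using eq by (auto simp: residue_cyls_def)
qed

lemma mp_bij_restrict_spaceI:
  assumes bij: "bij_betw f (space D) T" and f: "f \<in> measurable D N" and T: "T \<in> sets N"
    and distr: "distr D N f = density N (indicator T)"
  shows "mp_bij D (restrict_space N T) f"
  unfolding mp_bij_def
proof (intro conjI)
  have T': "T \<inter> space N \<in> sets N" using T sets.sets_into_space by (simp add: Int_absorb2)
  have spT: "space (restrict_space N T) = T" using T sets.sets_into_space by (auto simp: space_restrict_space)
  show "bij_betw f (space D) (space (restrict_space N T))" using bij spT by simp
  show meas: "f \<in> measurable D (restrict_space N T)"
    by (rule measurable_restrict_space2[OF _ f]) (use bij in \<open>auto simp: bij_betw_def\<close>)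
  show "distr D (restrict_space N T) f = restrict_space N T"
  proof (rule measure_eqI)
    fix A assume "A \<in> sets (distr D (restrict_space N T) f)"
    then have A: "A \<subseteq> T" "A \<in> sets N" using sets_restrict_space_iff[OF T'] by auto
    have "emeasure (distr D (restrict_space N T) f) A = emeasure D (f -` A \<inter> space D)"
      using A by (intro emeasure_distr[OF meas]) (simp add: sets_restrict_space_iff[OF T'])
    also have "\<dots> = emeasure (density N (indicator T)) A"
      unfolding distr[symmetric] by (rule emeasure_distr[OF f A(2), symmetric])
    also have "\<dots> = emeasure N A"
      using A by (simp add: emeasure_restricted[OF T] Int_absorb1)
    also have "\<dots> = emeasure (restrict_space N T) A"
      using A T' by (intro emeasure_restrict_space[symmetric])
    finally show "emeasure (distr D (restrict_space N T) f) A = emeasure (restrict_space N T) A" .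
  qed simp
qed

lemma space_monic_polys_times:
  assumes "S \<subseteq> P1 p d"
  shows "space (monic_polys p m \<Otimes>\<^sub>M restrict_space (poly_le p d) S) = Zp_tuples p {..<m} \<times> S"
  using assms P1_subset
  by (auto simp: space_pair_measure space_restrict_space space_monic space_poly_le)

lemma poly_mu_measurable_pair:
  assumes p: "p > 1" and S: "S \<subseteq> P1 p d"
  shows "poly_mu p m (m + d) \<in> measurable (monic_polys p m \<Otimes>\<^sub>M restrict_space (poly_le p d) S) (poly_le p (m + d))"
proof (rule poly_mu_measurable[OF p])
  fix a k assume a: "a < m"
  have "(\<lambda>g. g a k) \<in> measurable (monic_polys p m) (count_space UNIV)"
    unfolding monic_polys_def by (rule residue_measurable_haar_PiM) (simp add: a)
  then show "(\<lambda>x. fst x a k) \<in> measurable (monic_polys p m \<Otimes>\<^sub>M restrict_space (poly_le p d) S) (count_space UNIV)"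
    using measurable_comp[OF measurable_fst] by (simp add: comp_def)
next
  fix b k assume b: "b \<le> d"
  have "(\<lambda>h. h b k) \<in> measurable (restrict_space (poly_le p d) S) (count_space UNIV)"
    unfolding poly_le_def by (rule measurable_restrict_space1, rule residue_measurable_haar_PiM) (simp add: b)
  then show "(\<lambda>x. snd x b k) \<in> measurable (monic_polys p m \<Otimes>\<^sub>M restrict_space (poly_le p d) S) (count_space UNIV)"
    using measurable_comp[OF measurable_snd] by (simp add: comp_def)
next
  show "poly_mu p m (m + d) \<in> space (monic_polys p m \<Otimes>\<^sub>M restrict_space (poly_le p d) S) \<rightarrow> Zp_tuples p {..m + d}"
    unfolding space_monic_polys_times[OF S] using poly_mu_in_Zp_tuples[OF _ _ p] S P1_subset by blast
qed

lemma emeasure_residue_cyl_times: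
  assumes p: "p > 1" and S: "S \<in> sets (poly_le p d)" "residue_cyl p {..d} k \<beta> \<subseteq> S"
    and \<alpha>: "\<And>a. a < m \<Longrightarrow> 0 \<le> \<alpha> a \<and> \<alpha> a < int p ^ k"
    and \<beta>: "\<And>b. b \<le> d \<Longrightarrow> 0 \<le> \<beta> b \<and> \<beta> b < int p ^ k"
  shows "emeasure (monic_polys p m \<Otimes>\<^sub>M restrict_space (poly_le p d) S)
      (residue_cyl p {..<m} k \<alpha> \<times> residue_cyl p {..d} k \<beta>) = ennreal (1 / real p) ^ (k * card {..m + d})"
proof -
  have p0: "p > 0" using p by simp
  have SZ: "S \<inter> space (poly_le p d) \<in> sets (poly_le p d)" using S(1) sets.sets_into_space by (simp add: Int_absorb2)
  interpret sigma_finite_measure "restrict_space (poly_le p d) S"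
    using finite_measure_restrict_space[OF _ S(1)] prob_space_PiM[of "{..d}" "\<lambda>_. haar_Zp p"]
      prob_space_haar_Zp[OF p0] by (simp add: poly_le_def prob_space.finite_measure finite_measure.sigma_finite_measure)
  have "emeasure (monic_polys p m \<Otimes>\<^sub>M restrict_space (poly_le p d) S) (residue_cyl p {..<m} k \<alpha> \<times> residue_cyl p {..d} k \<beta>)
      = emeasure (monic_polys p m) (residue_cyl p {..<m} k \<alpha>) * emeasure (restrict_space (poly_le p d) S) (residue_cyl p {..d} k \<beta>)"
  proof (rule emeasure_pair_measure_Times)
    show "residue_cyl p {..<m} k \<alpha> \<in> sets (monic_polys p m)"
      unfolding monic_polys_def by (rule residue_cyl_sets) simp
    show "residue_cyl p {..d} k \<beta> \<in> sets (restrict_space (poly_le p d) S)"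
      unfolding sets_restrict_space_iff[OF SZ] using S(2) residue_cyl_sets[of "{..d}" p k \<beta>]
      by (simp add: poly_le_def)
  qed
  also have "emeasure (restrict_space (poly_le p d) S) (residue_cyl p {..d} k \<beta>) = emeasure (poly_le p d) (residue_cyl p {..d} k \<beta>)"
    using S(2) SZ by (intro emeasure_restrict_space)
  also have "emeasure (monic_polys p m) (residue_cyl p {..<m} k \<alpha>) = ennreal (1 / real p) ^ (k * card {..<m})"
    unfolding monic_polys_def by (rule emeasure_residue_cyl[OF p0]) (use \<alpha> in auto)
  also have "emeasure (poly_le p d) (residue_cyl p {..d} k \<beta>) = ennreal (1 / real p) ^ (k * card {..d})"
    unfolding poly_le_def by (rule emeasure_residue_cyl[OF p0]) (use \<beta> in auto)
  finally show ?thesis by (simp add: power_add[symmetric] algebra_simps)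
qed

locale poly_mu_restriction =
  fixes p m d K :: nat and S T :: "(nat \<Rightarrow> nat \<Rightarrow> int) set"
  assumes p: "p > 1" and K: "K \<ge> 1"
    and S: "S \<subseteq> P1 p d" "level_determined p {..d} K S"
    and T: "T \<subseteq> Bmn p m (m + d)" "level_determined p {..m + d} K T"
    and poly_mu_in_T_iff: "\<And>g h. g \<in> Zp_tuples p {..<m} \<Longrightarrow> h \<in> P1 p d \<Longrightarrow> poly_mu p m (m + d) (g, h) \<in> T \<longleftrightarrow> h \<in> S"
begin

lemma S_sets: "S \<in> sets (poly_le p d)"
proof -
  have "S \<inter> Zp_tuples p {..d} = S" using S(1) P1_subset by blast
  then show ?thesis using level_determined_sets[OF _ S(2)] by (simp add: poly_le_def)
qed

lemma T_sets: "T \<in> sets (poly_le p (m + d))"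
proof -
  have "T \<inter> Zp_tuples p {..m + d} = T" using T(1) Bmn_subset by blast
  then show ?thesis using level_determined_sets[OF _ T(2)] by (simp add: poly_le_def)
qed

lemma bij_betw_poly_mu_restrict: "bij_betw (poly_mu p m (m + d)) (Zp_tuples p {..<m} \<times> S) T"
proof (rule bij_betw_subset[OF bij_betw_poly_mu[OF p]])
  show "Zp_tuples p {..<m} \<times> S \<subseteq> Zp_tuples p {..<m} \<times> P1 p d" using S(1) by auto
  show "poly_mu p m (m + d) ` (Zp_tuples p {..<m} \<times> S) = T"
  proof
    show "poly_mu p m (m + d) ` (Zp_tuples p {..<m} \<times> S) \<subseteq> T" using poly_mu_in_T_iff S(1) by auto
    show "T \<subseteq> poly_mu p m (m + d) ` (Zp_tuples p {..<m} \<times> S)"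
    proof
      fix f assume f: "f \<in> T"
      then obtain g h where gh: "g \<in> Zp_tuples p {..<m}" "h \<in> P1 p d" "f = poly_mu p m (m + d) (g, h)"
        using T(1) poly_mu_surj[OF p] by blast
      then have "h \<in> S" using poly_mu_in_T_iff f by blast
      then show "f \<in> poly_mu p m (m + d) ` (Zp_tuples p {..<m} \<times> S)" using gh by blast
    qed
  qed
qed

lemma emeasure_poly_mu_vimage_residue_cyl:
  assumes k: "K \<le> k"
  shows "emeasure (monic_polys p m \<Otimes>\<^sub>M restrict_space (poly_le p d) S)
      (poly_mu p m (m + d) -` residue_cyl p {..m + d} k c \<inter> (Zp_tuples p {..<m} \<times> S))
    = emeasure (poly_le p (m + d)) (T \<inter> residue_cyl p {..m + d} k c)"
proof (cases "restrict c {..m + d} \<in> product_residues p m d k")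
  case False
  have k1: "k \<ge> 1" using K k by simp
  have "poly_mu p m (m + d) -` residue_cyl p {..m + d} k c \<inter> (Zp_tuples p {..<m} \<times> S) = {}"
    using residue_cyl_outside_product_residues(1)[OF p k1 False] S(1) by blast
  moreover have "T \<inter> residue_cyl p {..m + d} k c = {}"
    using residue_cyl_outside_product_residues(2)[OF p k1 False] T(1) by blast
  ultimately show ?thesis by simp
next
  case c_in: True
  have k1: "k \<ge> 1" using K k by simp
  obtain \<alpha> \<beta> where ab: "(\<alpha>, \<beta>) \<in> factor_residues p m d k" and mab: "mult_residues p m d k (\<alpha>, \<beta>) = restrict c {..m + d}"
    using c_in bij_betw_mult_residues[OF p k1] by (metis bij_betw_imp_surj_on imageE surj_pair)
  let ?G = "residue_cyl p {..<m} k \<alpha>" and ?H = "residue_cyl p {..d} k \<beta>" and ?X = "residue_cyl p {..m + d} k c"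
  have \<alpha>: "0 \<le> \<alpha> a \<and> \<alpha> a < int p ^ k" if "a < m" for a
    using factor_residues_fst[OF ab that] .
  have \<beta>: "0 \<le> \<beta> b \<and> \<beta> b < int p ^ k" if "b \<le> d" for b
    using factor_residues_snd[OF ab that] by (simp add: residues_mod_def)
  have vimage: "poly_mu p m (m + d) -` ?X \<inter> (Zp_tuples p {..<m} \<times> S) = ?G \<times> (?H \<inter> S)"
    using poly_mu_vimage_residue_cyl[OF p k1 ab mab] S(1) by blast
  \<comment> \<open>Membership in S and in T is decided on a single witness of the level-k class.\<close>
  have "?G \<noteq> {}" "?H \<noteq> {}" using \<alpha> \<beta> by (auto intro!: residue_cyl_nonempty[OF p])
  then obtain g0 h0 where g0: "g0 \<in> ?G" and h0: "h0 \<in> ?H" by blast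
  have g0Z: "g0 \<in> Zp_tuples p {..<m}" using g0 by (simp add: residue_cyl_def)
  have h0P: "h0 \<in> P1 p d" using h0 residue_cyl_subset_P1[OF p k1 ab] by blast
  have mu0: "poly_mu p m (m + d) (g0, h0) \<in> ?X"
    using poly_mu_vimage_residue_cyl[OF p k1 ab mab] g0 g0Z h0 h0P by blast
  show ?thesis
  proof (cases "?H \<subseteq> S")
    case True
    then have "poly_mu p m (m + d) (g0, h0) \<in> T" using poly_mu_in_T_iff[OF g0Z h0P] h0 by blast
    then have "?X \<subseteq> T" using level_determined_residue_cyl[OF T(2) k, of c] mu0 by blast
    then have "emeasure (poly_le p (m + d)) (T \<inter> ?X) = ennreal (1 / real p) ^ (k * card {..m + d})"
      using emeasure_residue_cyl_product_residues[OF p c_in] by (simp add: Int_absorb1)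
    moreover have "?G \<times> (?H \<inter> S) = ?G \<times> ?H" using True by blast
    ultimately show ?thesis
      using vimage emeasure_residue_cyl_times[OF p S_sets True \<alpha> \<beta>] by simp
  next
    case False
    then have HS: "?H \<inter> S = {}" using level_determined_residue_cyl[OF S(2) k, of \<beta>] by blast
    then have "poly_mu p m (m + d) (g0, h0) \<notin> T" using poly_mu_in_T_iff[OF g0Z h0P] h0 by blast
    then have "T \<inter> ?X = {}" using level_determined_residue_cyl[OF T(2) k, of c] mu0 by blast
    then show ?thesis using vimage HS by simp
  qed
qed

lemma mp_bij_poly_mu:
  "mp_bij (monic_polys p m \<Otimes>\<^sub>M restrict_space (poly_le p d) S) (restrict_space (poly_le p (m + d)) T)
     (poly_mu p m (m + d))"
proof -
  let ?D = "monic_polys p m \<Otimes>\<^sub>M restrict_space (poly_le p d) S"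
  let ?N = "poly_le p (m + d)"
  have spD: "space ?D = Zp_tuples p {..<m} \<times> S" by (rule space_monic_polys_times[OF S(1)])
  have meas: "poly_mu p m (m + d) \<in> measurable ?D ?N" by (rule poly_mu_measurable_pair[OF p S(1)])
  have "finite_measure (monic_polys p m)" "finite_measure (poly_le p d)"
    unfolding monic_polys_def poly_le_def using p
    by (auto intro!: prob_space.finite_measure prob_space_PiM prob_space_haar_Zp)
  then have "finite_measure ?D"
    using S_sets by (intro finite_measure_pair_measure finite_measure_restrict_space)
  then have fin: "emeasure (distr ?D ?N (poly_mu p m (m + d))) A \<noteq> \<infinity>" for A
    using finite_measure.emeasure_finite[OF finite_measure.finite_measure_distr[OF _ meas]] by simp
  have "distr ?D ?N (poly_mu p m (m + d)) = density ?N (indicator T)"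
  proof (rule haar_PiM_eqI_residue_cyls[OF _ _ _ fin])
    fix k c assume k: "K \<le> k"
    have X: "residue_cyl p {..m + d} k c \<in> sets ?N" unfolding poly_le_def by (rule residue_cyl_sets) simp
    show "emeasure (distr ?D ?N (poly_mu p m (m + d))) (residue_cyl p {..m + d} k c)
        = emeasure (density ?N (indicator T)) (residue_cyl p {..m + d} k c)"
      using emeasure_poly_mu_vimage_residue_cyl[OF k, of c]
      by (simp add: emeasure_distr[OF meas X] emeasure_restricted[OF T_sets X] spD)
  qed (simp_all add: poly_le_def)
  moreover have "bij_betw (poly_mu p m (m + d)) (space ?D) T" using bij_betw_poly_mu_restrict spD by simp
  ultimately show ?thesis using mp_bij_restrict_spaceI[OF _ meas T_sets] by blast
qed

end

section \<open>A Gauss-type lemma for the scaling f(x) to q^r f(x/q)\<close>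

text \<open>For an integer coefficient sequence \<open>\<gamma>\<close>, the j-th coefficient of \<open>q^s \<gamma>(x/q)\<close> is
  \<open>q^s \<gamma>_j / q^j\<close>; it is integral and reduces mod q to the j-th coefficient of \<open>x^D\<close> iff the
  following congruence holds.\<close>

definition scaled_coeff_cong :: "int \<Rightarrow> nat \<Rightarrow> nat \<Rightarrow> (nat \<Rightarrow> int) \<Rightarrow> nat \<Rightarrow> bool" where
  "scaled_coeff_cong q s D \<gamma> j \<longleftrightarrow>
     (q ^ s * \<gamma> j) mod q ^ (j + 1) = ((if j = D then 1 else 0) * q ^ j) mod q ^ (j + 1)"

lemma scaled_coeff_cong_dvd:
  assumes "scaled_coeff_cong q s D \<gamma> j"
  shows "q ^ j dvd q ^ s * \<gamma> j"
proof -
  have "q ^ (j + 1) dvd q ^ s * \<gamma> j - (if j = D then 1 else 0) * q ^ j"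
    using assms unfolding scaled_coeff_cong_def by (simp only: mod_eq_dvd_iff)
  then have "q ^ j dvd q ^ s * \<gamma> j - (if j = D then 1 else 0) * q ^ j"
    by (rule dvd_trans[rotated]) (simp add: le_imp_power_dvd)
  then show ?thesis by (metis diff_add_cancel dvd_add dvd_triv_right)
qed

lemma scaled_coeff_cong_shift:
  assumes q: "q \<noteq> 0"
  shows "scaled_coeff_cong q (m + s) (m + D) \<gamma> (m + j) \<longleftrightarrow> scaled_coeff_cong q s D (\<lambda>j. \<gamma> (m + j)) j"
proof -
  have "(q ^ m * (q ^ s * \<gamma> (m + j))) mod (q ^ m * q ^ (j + 1))
      = (q ^ m * ((if j = D then 1 else 0) * q ^ j)) mod (q ^ m * q ^ (j + 1))
    \<longleftrightarrow> (q ^ s * \<gamma> (m + j)) mod q ^ (j + 1) = ((if j = D then 1 else 0) * q ^ j) mod q ^ (j + 1)"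
    using q by (simp add: mod_mult_mult1)
  then show ?thesis
    unfolding scaled_coeff_cong_def by (simp add: power_add mult_ac)
qed

lemma power_dvd_product_term:
  fixes q :: int
  assumes a: "a < m" "a \<le> j" and dv: "q ^ (j - a) dvd q ^ s * y"
  shows "q ^ (j + 1) dvd q ^ (m + s) * x * y"
proof -
  obtain t where t: "q ^ s * y = q ^ (j - a) * t" using dv by (auto simp: dvd_def)
  have "q ^ (m + s) * x * y = q ^ m * x * (q ^ s * y)" by (simp add: power_add algebra_simps)
  also have "\<dots> = q ^ (m + (j - a)) * (x * t)" unfolding t by (simp add: power_add algebra_simps)
  moreover have "q ^ (j + 1) dvd q ^ (m + (j - a))" using a by (intro le_imp_power_dvd) simp
  ultimately show ?thesis by (metis dvd_mult2)
qed

lemma sum_atMost_mod_single: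
  fixes t :: "nat \<Rightarrow> int"
  assumes "\<And>a. a \<le> j \<Longrightarrow> a \<noteq> m \<Longrightarrow> Q dvd t a"
  shows "(\<Sum>a\<le>j. t a) mod Q = (if m \<le> j then t m else 0) mod Q"
proof -
  have "(\<Sum>a\<le>j. t a) mod Q = (\<Sum>a\<le>j. if a = m then t m else 0) mod Q"
    by (rule sum_mod_cong) (use assms in \<open>auto simp: dvd_eq_mod_eq_0\<close>)
  then show ?thesis by simp
qed

lemma scaled_product_coeff_mod:
  fixes q :: int
  assumes hc: "\<And>a. a < m \<Longrightarrow> a \<le> j \<Longrightarrow> j - a \<le> d \<Longrightarrow> scaled_coeff_cong q s d \<beta> (j - a)"
  shows "(q ^ (m + s) * coeff (monic_poly m \<alpha> * trunc_poly d \<beta>) j) mod q ^ (j + 1)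
       = (if m \<le> j then q ^ (m + s) * coeff (trunc_poly d \<beta>) (j - m) else 0) mod q ^ (j + 1)"
proof -
  have "(q ^ (m + s) * coeff (monic_poly m \<alpha> * trunc_poly d \<beta>) j) mod q ^ (j + 1)
      = (\<Sum>a\<le>j. q ^ (m + s) * coeff (monic_poly m \<alpha>) a * coeff (trunc_poly d \<beta>) (j - a)) mod q ^ (j + 1)"
    by (simp add: coeff_mult sum_distrib_left mult.assoc)
  also have "\<dots> = (if m \<le> j then q ^ (m + s) * coeff (monic_poly m \<alpha>) m * coeff (trunc_poly d \<beta>) (j - m)
      else 0) mod q ^ (j + 1)"
  proof (rule sum_atMost_mod_single)
    fix a assume a: "a \<le> j" "a \<noteq> m"
    show "q ^ (j + 1) dvd q ^ (m + s) * coeff (monic_poly m \<alpha>) a * coeff (trunc_poly d \<beta>) (j - a)"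
    proof (cases "a < m")
      case True
      show ?thesis
      proof (rule power_dvd_product_term[OF True a(1)])
        show "q ^ (j - a) dvd q ^ s * coeff (trunc_poly d \<beta>) (j - a)"
          using scaled_coeff_cong_dvd[OF hc[OF True a(1)]] by (cases "j - a \<le> d") (simp_all add: coeff_trunc_poly)
      qed
    qed (use a in \<open>simp add: coeff_monic_poly\<close>)
  qed
  finally show ?thesis by (simp add: coeff_monic_poly)
qed

lemma scaled_coeff_cong_product_low:
  fixes q :: int
  assumes j: "j < m" and hc: "\<And>b. b \<le> d \<Longrightarrow> scaled_coeff_cong q s d \<beta> b"
  shows "scaled_coeff_cong q (m + s) (m + d) (coeff (monic_poly m \<alpha> * trunc_poly d \<beta>)) j"
  using scaled_product_coeff_mod[of m j d q s \<beta> \<alpha>] hc j by (simp add: scaled_coeff_cong_def)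

lemma scaled_coeff_cong_product_high:
  fixes q :: int
  assumes q: "q \<noteq> 0" and b: "b \<le> d"
    and hc: "\<And>b'. b < b' \<Longrightarrow> b' \<le> d \<Longrightarrow> scaled_coeff_cong q s d \<beta> b'"
  shows "scaled_coeff_cong q (m + s) (m + d) (coeff (monic_poly m \<alpha> * trunc_poly d \<beta>)) (m + b)
    \<longleftrightarrow> scaled_coeff_cong q s d \<beta> b"
proof -
  have "(q ^ (m + s) * coeff (monic_poly m \<alpha> * trunc_poly d \<beta>) (m + b)) mod q ^ (m + b + 1)
      = (q ^ (m + s) * \<beta> b) mod q ^ (m + b + 1)"
    using scaled_product_coeff_mod[of m "m + b" d q s \<beta> \<alpha>] hc b by (simp add: coeff_trunc_poly)
  then have "scaled_coeff_cong q (m + s) (m + d) (coeff (monic_poly m \<alpha> * trunc_poly d \<beta>)) (m + b)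
      \<longleftrightarrow> scaled_coeff_cong q (m + s) (m + d) (\<lambda>j. \<beta> (j - m)) (m + b)"
    by (simp add: scaled_coeff_cong_def)
  also have "\<dots> \<longleftrightarrow> scaled_coeff_cong q s d \<beta> b"
    using scaled_coeff_cong_shift[OF q, of m s d "\<lambda>j. \<beta> (j - m)" b] by simp
  finally show ?thesis .
qed

lemma scaled_coeff_cong_product_iff:
  fixes q :: int
  assumes q: "q \<noteq> 0"
  shows "(\<forall>j\<le>m + d. scaled_coeff_cong q (m + s) (m + d) (coeff (monic_poly m \<alpha> * trunc_poly d \<beta>)) j)
     \<longleftrightarrow> (\<forall>b\<le>d. scaled_coeff_cong q s d \<beta> b)"
proof
  assume prod: "\<forall>j\<le>m + d. scaled_coeff_cong q (m + s) (m + d) (coeff (monic_poly m \<alpha> * trunc_poly d \<beta>)) j"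
  show "\<forall>b\<le>d. scaled_coeff_cong q s d \<beta> b"
  proof (intro allI impI)
    fix b assume "b \<le> d"
    then show "scaled_coeff_cong q s d \<beta> b"
    proof (induction "d - b" arbitrary: b rule: less_induct)
      case less
      have IH: "scaled_coeff_cong q s d \<beta> b'" if "b < b'" "b' \<le> d" for b'
        by (rule less.hyps) (use that in auto)
      have "scaled_coeff_cong q (m + s) (m + d) (coeff (monic_poly m \<alpha> * trunc_poly d \<beta>)) (m + b)"
        using prod less.prems by simp
      then show ?case using scaled_coeff_cong_product_high[OF q less.prems IH] by blast
    qed
  qed
next
  assume fac: "\<forall>b\<le>d. scaled_coeff_cong q s d \<beta> b"
  show "\<forall>j\<le>m + d. scaled_coeff_cong q (m + s) (m + d) (coeff (monic_poly m \<alpha> * trunc_poly d \<beta>)) j"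
  proof (intro allI impI)
    fix j assume j: "j \<le> m + d"
    show "scaled_coeff_cong q (m + s) (m + d) (coeff (monic_poly m \<alpha> * trunc_poly d \<beta>)) j"
    proof (cases "j < m")
      case True
      then show ?thesis using scaled_coeff_cong_product_low fac by blast
    next
      case False
      then obtain b where "j = m + b" by (metis le_Suc_ex not_less)
      then show ?thesis using scaled_coeff_cong_product_high[OF q] fac j by simp
    qed
  qed
qed

section \<open>The scaling conditions\<close>

lemma zp_mult_of_int: "zp_mult p (zp_of_int p a) c = (\<lambda>k. (a * c k) mod int p ^ k)"
  by (simp add: zp_mult_def zp_of_int_def fun_eq_iff mod_mult_left_eq)

lemma Zp_pow_dvd_levels:
  assumes x: "x \<in> Zp p" and dv: "int p ^ j dvd int p ^ r * x (j + 1)" and k: "k \<ge> 1"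
  shows "int p ^ j dvd int p ^ r * x (k + j)"
proof -
  have "x (j + 1) = x (k + j) mod int p ^ (j + 1)" using Zp_compat[OF x, of "j + 1" "k + j"] k by simp
  then have "(int p ^ r * x (k + j)) mod int p ^ (j + 1) = (int p ^ r * x (j + 1)) mod int p ^ (j + 1)"
    by (metis mod_mult_right_eq)
  then have "int p ^ (j + 1) dvd int p ^ r * x (k + j) - int p ^ r * x (j + 1)"
    by (simp only: mod_eq_dvd_iff)
  then have "int p ^ j dvd int p ^ r * x (k + j) - int p ^ r * x (j + 1)"
    by (rule dvd_trans[rotated]) (simp add: le_imp_power_dvd)
  then show ?thesis using dv by (metis diff_add_cancel dvd_add)
qed

lemma Zp_divide_pow:
  assumes p: "p > 1" and x: "x \<in> Zp p" and dv: "int p ^ j dvd int p ^ r * x (j + 1)"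
  obtains c where "c \<in> Zp p" "zp_mult p (zp_of_int p (int p ^ j)) c = zp_mult p (zp_of_int p (int p ^ r)) x"
    "int p ^ j * c 1 = (int p ^ r * x (j + 1)) mod int p ^ (j + 1)"
proof -
  let ?q = "int p"
  \<comment> \<open>The residue of the quotient mod p^k is read off from x at level k + j.\<close>
  define b where "b k = (?q ^ r * x (k + j)) div ?q ^ j" for k
  have eb: "?q ^ j * b k = ?q ^ r * x (k + j)" if "k \<ge> 1" for k
    using Zp_pow_dvd_levels[OF x dv that] unfolding b_def by simp
  define c where "c k = (if k = 0 then 0 else b k mod ?q ^ k)" for k
  have bcomp: "b k mod ?q ^ k = b (Suc k) mod ?q ^ k" if k: "k \<ge> 1" for k
  proof -
    have "x (k + j) = x (Suc k + j) mod ?q ^ (k + j)" using Zp_compat[OF x, of "k + j" "Suc k + j"] by simp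
    then have "(?q ^ r * x (Suc k + j)) mod ?q ^ (k + j) = (?q ^ r * x (k + j)) mod ?q ^ (k + j)"
      by (metis mod_mult_right_eq)
    then have "(?q ^ j * b (Suc k)) mod (?q ^ j * ?q ^ k) = (?q ^ j * b k) mod (?q ^ j * ?q ^ k)"
      using eb[of k] eb[of "Suc k"] k by (simp add: power_add mult.commute)
    then show ?thesis using p by (simp add: mod_mult_mult1)
  qed
  have cZ: "c \<in> Zp p"
    unfolding c_def
  proof (rule Zp_of_compatible)
    fix k :: nat assume k: "k \<ge> 1"
    show "0 \<le> b k mod ?q ^ k \<and> b k mod ?q ^ k < ?q ^ k" using p by simp
    have "?q ^ k dvd ?q ^ Suc k" by (simp add: le_imp_power_dvd)
    then show "b k mod ?q ^ k = b (Suc k) mod ?q ^ Suc k mod ?q ^ k"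
      using bcomp[OF k] by (simp only: mod_mod_cancel)
  qed
  have ceq: "zp_mult p (zp_of_int p (?q ^ j)) c = zp_mult p (zp_of_int p (?q ^ r)) x"
    unfolding zp_mult_of_int
  proof
    fix k
    show "(?q ^ j * c k) mod ?q ^ k = (?q ^ r * x k) mod ?q ^ k"
    proof (cases "k = 0")
      case False
      have "(?q ^ j * c k) mod ?q ^ k = (?q ^ j * b k) mod ?q ^ k"
        using False unfolding c_def by (simp add: mod_mult_right_eq)
      also have "\<dots> = (?q ^ r * x (k + j)) mod ?q ^ k" using eb[of k] False by simp
      also have "\<dots> = (?q ^ r * x k) mod ?q ^ k"
        using Zp_compat[OF x, of k "k + j"] by (metis le_add1 mod_mult_right_eq)
      finally show ?thesis .
    qed simp
  qed
  have "?q ^ j * c 1 = (?q ^ j * b 1) mod (?q ^ j * ?q)" by (simp add: c_def mod_mult_mult1)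
  also have "\<dots> = (?q ^ r * x (j + 1)) mod ?q ^ (j + 1)"
    using eb[of 1] by (simp add: power_Suc2 add.commute mult.commute)
  finally show thesis using that cZ ceq by blast
qed

lemma scaled_coeff_iff:
  assumes p: "p > 1" and x: "x \<in> Zp p"
  shows "(\<exists>c. c \<in> Zp p \<and> zp_mult p (zp_of_int p (int p ^ j)) c = zp_mult p (zp_of_int p (int p ^ r)) x
          \<and> zp_red c = (if j = D then 1 else 0))
     \<longleftrightarrow> scaled_coeff_cong (int p) r D (\<lambda>i. x (i + 1)) j"
proof -
  let ?q = "int p" and ?\<delta> = "if j = D then 1 else 0 :: int"
  have low: "?q ^ j * (y mod ?q) = (?q ^ j * y) mod ?q ^ (j + 1)" for y
    by (simp add: mod_mult_mult1 power_Suc2)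
  have \<delta>_mod: "?\<delta> mod ?q = ?\<delta>" using p by simp
  have \<delta>: "?q ^ j * ?\<delta> = (?\<delta> * ?q ^ j) mod ?q ^ (j + 1)"
    using low[of ?\<delta>] \<delta>_mod by (simp add: mult.commute)
  show ?thesis
  proof
    assume "\<exists>c. c \<in> Zp p \<and> zp_mult p (zp_of_int p (?q ^ j)) c = zp_mult p (zp_of_int p (?q ^ r)) x
          \<and> zp_red c = ?\<delta>"
    then obtain c where c: "c \<in> Zp p" "zp_mult p (zp_of_int p (?q ^ j)) c = zp_mult p (zp_of_int p (?q ^ r)) x"
      "zp_red c = ?\<delta>" by blast
    have "(?q ^ r * x (j + 1)) mod ?q ^ (j + 1) = (?q ^ j * c (j + 1)) mod ?q ^ (j + 1)"
      using fun_cong[OF c(2), of "j + 1"] by (simp add: zp_mult_of_int)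
    also have "\<dots> = ?q ^ j * (c (j + 1) mod ?q)" by (rule low[symmetric])
    also have "c (j + 1) mod ?q = ?\<delta>"
      using Zp_compat[OF c(1), of 1 "j + 1"] c(3) by (simp add: zp_red_def)
    finally show "scaled_coeff_cong ?q r D (\<lambda>i. x (i + 1)) j"
      using \<delta> by (simp add: scaled_coeff_cong_def)
  next
    assume R: "scaled_coeff_cong ?q r D (\<lambda>i. x (i + 1)) j"
    obtain c where c: "c \<in> Zp p" "zp_mult p (zp_of_int p (?q ^ j)) c = zp_mult p (zp_of_int p (?q ^ r)) x"
      "?q ^ j * c 1 = (?q ^ r * x (j + 1)) mod ?q ^ (j + 1)"
      using Zp_divide_pow[OF p x] scaled_coeff_cong_dvd[OF R] by auto
    have "?q ^ j * c 1 = ?q ^ j * ?\<delta>" using c(3) R \<delta> by (simp only: scaled_coeff_cong_def)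
    then have "zp_red c = ?\<delta>" using p by (simp add: zp_red_def)
    then show "\<exists>c. c \<in> Zp p \<and> zp_mult p (zp_of_int p (?q ^ j)) c = zp_mult p (zp_of_int p (?q ^ r)) x
          \<and> zp_red c = ?\<delta>" using c by blast
  qed
qed

definition scaled_cong :: "nat \<Rightarrow> nat \<Rightarrow> nat \<Rightarrow> (nat \<Rightarrow> nat \<Rightarrow> int) \<Rightarrow> bool" where
  "scaled_cong p r D f \<longleftrightarrow> (\<forall>j\<le>D. scaled_coeff_cong (int p) r D (\<lambda>j. f j (j + 1)) j)"

lemma scaled_cond_iff_scaled_cong:
  assumes p: "p > 1" and f: "\<And>j. j \<le> D \<Longrightarrow> f j \<in> Zp p"
  shows "scaled_cond p r D f \<longleftrightarrow> scaled_cong p r D f"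
proof -
  let ?P = "\<lambda>j c. c \<in> Zp p \<and> zp_mult p (zp_of_int p (int p ^ j)) c = zp_mult p (zp_of_int p (int p ^ r)) (f j)
              \<and> zp_red c = (if j = D then 1 else 0)"
  have "scaled_cond p r D f \<longleftrightarrow> (\<exists>c. \<forall>j\<le>D. ?P j (c j))" by (simp add: scaled_cond_def)
  also have "\<dots> \<longleftrightarrow> (\<forall>j\<le>D. \<exists>c. ?P j c)"
  proof
    assume "\<forall>j\<le>D. \<exists>c. ?P j c"
    then have "\<forall>j. \<exists>c. j \<le> D \<longrightarrow> ?P j c" by blast
    then obtain c where "\<forall>j. j \<le> D \<longrightarrow> ?P j (c j)" by metis
    then show "\<exists>c. \<forall>j\<le>D. ?P j (c j)" by blast
  qed blast
  also have "\<dots> \<longleftrightarrow> scaled_cong p r D f"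
    unfolding scaled_cong_def
  proof (intro all_cong imp_cong refl)
    fix j assume "j \<le> D"
    then show "(\<exists>c. ?P j c) \<longleftrightarrow> scaled_coeff_cong (int p) r D (\<lambda>j. f j (j + 1)) j"
      using scaled_coeff_iff[OF p f, of j j r D] by (simp add: scaled_coeff_cong_def)
  qed
  finally show ?thesis .
qed

lemma scaled_cong_cong:
  assumes "\<forall>j\<le>D. f j (j + 1) = f' j (j + 1)"
  shows "scaled_cong p r D f \<longleftrightarrow> scaled_cong p r D f'"
  using assms by (simp add: scaled_cong_def scaled_coeff_cong_def)

lemma level_determined_scaled_cond:
  assumes p: "p > 1" and K: "D + 1 \<le> K"
  shows "level_determined p {..D} K {f. scaled_cond p r D f}"
proof (rule level_determinedI)
  fix f f' assume f: "f \<in> Zp_tuples p {..D}" and f': "f' \<in> Zp_tuples p {..D}"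
    and eq: "\<forall>j\<in>{..D}. \<forall>l\<le>K. f j l = f' j l" and "f \<in> {f. scaled_cond p r D f}"
  have fz: "f j \<in> Zp p" "f' j \<in> Zp p" if "j \<le> D" for j using f f' that by (auto simp: Zp_tuples_def)
  have "scaled_cong p r D f" using \<open>f \<in> {f. scaled_cond p r D f}\<close> scaled_cond_iff_scaled_cong[OF p fz(1)] by simp
  then have "scaled_cong p r D f'" using scaled_cong_cong[of D f f'] eq K by auto
  then show "f' \<in> {f. scaled_cond p r D f}" using scaled_cond_iff_scaled_cong[OF p fz(2)] by simp
qed

lemma level_determined_P1: "K \<ge> 1 \<Longrightarrow> level_determined p {..d} K (P1 p d)"
  by (rule level_determinedI) (auto simp: P1_def space_poly_le zp_red_def)

lemma level_determined_Bmn: "K \<ge> 1 \<Longrightarrow> level_determined p {..m + d} K (Bmn p m (m + d))"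
  by (rule level_determinedI) (auto simp: Bmn_def space_poly_le zp_red_def)

lemma mult_residue_mod_level:
  assumes "x \<in> Zp p" "l \<le> L"
  shows "(a * x l) mod int p ^ l = (a * x L) mod int p ^ l"
  using Zp_compat[OF assms] by (metis mod_mult_right_eq)

lemma scaled_cong_poly_mu_iff:
  assumes p: "p > 1" and g: "g \<in> Zp_tuples p {..<m}" and h: "h \<in> Zp_tuples p {..d}" and r: "m \<le> r"
  shows "scaled_cong p r (m + d) (poly_mu p m (m + d) (g, h)) \<longleftrightarrow> scaled_cong p (r - m) d h"
proof -
  let ?q = "int p"
  define L where "L = m + d + 1"
  define \<alpha> where "\<alpha> = (\<lambda>a. g a L)"
  define \<beta> where "\<beta> = (\<lambda>b. h b L)"
  define s where "s = r - m"
  have rs: "r = m + s" using r by (simp add: s_def)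
  have q0: "?q \<noteq> 0" using p by simp
  let ?F = "poly_mu p m (m + d) (g, h)"
  have FOm: "?F \<in> Zp_tuples p {..m + d}" by (rule poly_mu_in_Zp_tuples[OF g h p])
  have lhs: "(?q ^ r * ?F j (j + 1)) mod ?q ^ (j + 1) = (?q ^ (m + s) * coeff (monic_poly m \<alpha> * trunc_poly d \<beta>) j) mod ?q ^ (j + 1)"
    if j: "j \<le> m + d" for j
  proof -
    have Fz: "?F j \<in> Zp p" using FOm j by (auto simp: Zp_tuples_def)
    have "(?q ^ r * ?F j (j + 1)) mod ?q ^ (j + 1) = (?q ^ r * ?F j L) mod ?q ^ (j + 1)"
      using j by (intro mult_residue_mod_level[OF Fz]) (simp add: L_def)
    also have "\<dots> = (?q ^ r * (coeff (monic_poly m \<alpha> * trunc_poly d \<beta>) j mod ?q ^ L)) mod ?q ^ (j + 1)"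
      using poly_mu_coeff[OF j, of p g h L] by (simp add: \<alpha>_def \<beta>_def)
    also have "\<dots> = (?q ^ r * coeff (monic_poly m \<alpha> * trunc_poly d \<beta>) j) mod ?q ^ (j + 1)"
    proof -
      have dv: "?q ^ (j + 1) dvd ?q ^ L" using j by (intro le_imp_power_dvd) (simp add: L_def)
      show ?thesis
        by (metis mod_mult_right_eq mod_mod_cancel[OF dv])
    qed
    finally show ?thesis by (simp add: rs)
  qed
  have rhs: "(?q ^ s * h b (b + 1)) mod ?q ^ (b + 1) = (?q ^ s * \<beta> b) mod ?q ^ (b + 1)"
    if b: "b \<le> d" for b
  proof -
    have hz: "h b \<in> Zp p" using h b by (auto simp: Zp_tuples_def)
    show ?thesis unfolding \<beta>_def by (rule mult_residue_mod_level[OF hz]) (use b in \<open>simp add: L_def\<close>)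
  qed
  have "scaled_cong p r (m + d) ?F \<longleftrightarrow>
      (\<forall>j\<le>m + d. scaled_coeff_cong ?q (m + s) (m + d) (coeff (monic_poly m \<alpha> * trunc_poly d \<beta>)) j)"
    unfolding scaled_cong_def scaled_coeff_cong_def using lhs by simp
  also have "\<dots> \<longleftrightarrow> (\<forall>b\<le>d. scaled_coeff_cong ?q s d \<beta> b)" by (rule scaled_coeff_cong_product_iff[OF q0])
  also have "\<dots> \<longleftrightarrow> scaled_cong p (r - m) d h"
    unfolding scaled_cong_def scaled_coeff_cong_def s_def[symmetric] using rhs by simp
  finally show ?thesis .
qed

lemma scaled_cond_poly_mu_iff:
  assumes p: "p > 1" and g: "g \<in> Zp_tuples p {..<m}" and h: "h \<in> P1 p d" and r: "m \<le> r"
  shows "scaled_cond p r (m + d) (poly_mu p m (m + d) (g, h)) \<longleftrightarrow> scaled_cond p (r - m) d h"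
proof -
  have hZ: "h \<in> Zp_tuples p {..d}" using h P1_subset by auto
  have fZ: "poly_mu p m (m + d) (g, h) \<in> Zp_tuples p {..m + d}" by (rule poly_mu_in_Zp_tuples[OF g hZ p])
  have "scaled_cond p r (m + d) (poly_mu p m (m + d) (g, h)) \<longleftrightarrow> scaled_cong p r (m + d) (poly_mu p m (m + d) (g, h))"
    by (rule scaled_cond_iff_scaled_cong[OF p]) (use fZ in \<open>auto simp: Zp_tuples_def\<close>)
  also have "\<dots> \<longleftrightarrow> scaled_cong p (r - m) d h" by (rule scaled_cong_poly_mu_iff[OF p g hZ r])
  also have "\<dots> \<longleftrightarrow> scaled_cond p (r - m) d h"
    by (rule scaled_cond_iff_scaled_cong[OF p, symmetric]) (use hZ in \<open>auto simp: Zp_tuples_def\<close>)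
  finally show ?thesis .
qed

theorem lemma2p9:
  fixes p m n :: nat
  assumes "prime p" and "m \<le> n"
  shows "mp_bij (monic_polys p m \<Otimes>\<^sub>M restrict_space (poly_le p (n - m)) (P1 p (n - m)))
                (restrict_space (poly_le p n) (Bmn p m n))
                (poly_mu p m n)
       \<and> (\<forall>r::nat. m \<le> r \<and> r \<le> n \<longrightarrow>
            mp_bij (monic_polys p m \<Otimes>\<^sub>M
                      restrict_space (poly_le p (n - m)) {h \<in> P1 p (n - m). scaled_cond p (r - m) (n - m) h})
                   (restrict_space (poly_le p n) {f \<in> Bmn p m n. scaled_cond p r n f})
                   (poly_mu p m n))"
proof -
  have p: "p > 1" using assms(1) by (rule prime_gt_1_nat)
  obtain d where n: "n = m + d" using assms(2) le_Suc_ex by blast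
  have "poly_mu_restriction p m d 1 (P1 p d) (Bmn p m (m + d))"
    by unfold_locales (use p level_determined_P1 level_determined_Bmn poly_mu_in_Bmn in auto)
  moreover have "poly_mu_restriction p m d (m + d + 1)
      {h \<in> P1 p d. scaled_cond p (r - m) d h} {f \<in> Bmn p m (m + d). scaled_cond p r (m + d) f}"
    if "m \<le> r" for r
    by unfold_locales
      (use that p level_determined_conj[OF level_determined_P1 level_determined_scaled_cond[OF p]]
         level_determined_conj[OF level_determined_Bmn level_determined_scaled_cond[OF p]]
         poly_mu_in_Bmn[OF p] scaled_cond_poly_mu_iff[OF p] in auto)
  ultimately show ?thesis unfolding n by (auto intro: poly_mu_restriction.mp_bij_poly_mu)
qed

end
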